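(* Let $p\in(0,1]$ and let $\bar Q=(\bar q_{j,k})_{j,k\geq1}$ be the generator on $\mathbb N=\{1,2,\dots\}$ with $\bar q_{j,k}=\binom{j-1}{k-1}p^k(1-p)^{j-k}$ for $1\leq k\leq j-1$, $\bar q_{j,j+1}=(j+1)p$, $\bar q_{j,j}=p^j-(2+j)p$, and $\bar q_{j,k}=0$ otherwise. Let $q>0$. \begin{enumerate} \item If $-1+q+p^q<0$, then $\bar Q$ is positive recurrent and its stationary distribution has a finite $q$th moment. \item If $p^q=1-q$, $p<e^{-1}$ and $r>0$, then $\bar Q$ is positive recurrent and a random variable $X$ with its stationary distribution satisfies $\mathbb E\big(X^q(\log(X+1))^{-(r+1)}\big)<\infty$. \end{enumerate} *)

theory Defs
  imports "HOL-Analysis.Analysis"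
begin

text \<open>Positive recurrence is defined
  via the jump chain / holding-time decomposition (Norris, Markov Chains):
  the state i is positive recurrent iff the chain started at i returns to i
  with probability one and the expected return time
  m_i = E_i(inf {t >= J_1. X_t = i}) is finite.  The return probability and
  the expected return time are written as sums over the (countably many)
  first-return paths of the jump chain.\<close>

definition qrate :: "(nat \<Rightarrow> nat \<Rightarrow> real) \<Rightarrow> nat \<Rightarrow> real" where
  "qrate Q i = - Q i i"

text \<open>Jump matrix of the jump chain (Norris' convention for absorbing states).\<close>
definition jump_prob :: "(nat \<Rightarrow> nat \<Rightarrow> real) \<Rightarrow> nat \<Rightarrow> nat \<Rightarrow> real" where
  "jump_prob Q i j =
     (if qrate Q i = 0 then (if i = j then 1 else 0)
      else (if i = j then 0 else Q i j / qrate Q i))"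

text \<open>Paths x_1,...,x_n of the jump chain after leaving i, with x_n = i the
  first return to i.\<close>
definition first_return_paths :: "nat set \<Rightarrow> nat \<Rightarrow> nat list set" where
  "first_return_paths S i =
     {xs. xs \<noteq> [] \<and> set xs \<subseteq> S \<and> last xs = i \<and> i \<notin> set (butlast xs)}"

definition path_prob :: "(nat \<Rightarrow> nat \<Rightarrow> real) \<Rightarrow> nat \<Rightarrow> nat list \<Rightarrow> real" where
  "path_prob Q i xs = prod_list (map (\<lambda>(a, b). jump_prob Q a b) (zip (i # xs) xs))"

text \<open>Expected total holding time along the path before arriving back at i.\<close>
definition path_time :: "(nat \<Rightarrow> nat \<Rightarrow> real) \<Rightarrow> nat \<Rightarrow> nat list \<Rightarrow> real" where
  "path_time Q i xs = sum_list (map (\<lambda>a. 1 / qrate Q a) (i # butlast xs))"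

definition positive_recurrent_state :: "(nat \<Rightarrow> nat \<Rightarrow> real) \<Rightarrow> nat set \<Rightarrow> nat \<Rightarrow> bool" where
  "positive_recurrent_state Q S i \<longleftrightarrow>
     qrate Q i > 0 \<and>
     (path_prob Q i has_sum 1) (first_return_paths S i) \<and>
     (\<lambda>xs. path_prob Q i xs * path_time Q i xs) summable_on (first_return_paths S i)"

definition positive_recurrent :: "(nat \<Rightarrow> nat \<Rightarrow> real) \<Rightarrow> nat set \<Rightarrow> bool" where
  "positive_recurrent Q S \<longleftrightarrow> (\<forall>i\<in>S. positive_recurrent_state Q S i)"

definition stationary_distribution :: "(nat \<Rightarrow> nat \<Rightarrow> real) \<Rightarrow> nat set \<Rightarrow> (nat \<Rightarrow> real) \<Rightarrow> bool" where
  "stationary_distribution Q S \<pi> \<longleftrightarrow>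
     (\<forall>j\<in>S. \<pi> j \<ge> 0) \<and> (\<pi> has_sum 1) S \<and>
     (\<forall>k\<in>S. ((\<lambda>j. \<pi> j * Q j k) has_sum 0) S)"

definition Qbar :: "real \<Rightarrow> nat \<Rightarrow> nat \<Rightarrow> real" where
  "Qbar p j k =
     (if j = 0 \<or> k = 0 then 0
      else if k \<le> j - 1 then real ((j - 1) choose (k - 1)) * p ^ k * (1 - p) ^ (j - k)
      else if k = j + 1 then real (j + 1) * p
      else if k = j then p ^ j - (2 + real j) * p
      else 0)"

end

(*
  The jump chain of Qbar p moves up by at most one state per jump and, for p < 1, reaches every
  lower state in a single jump.  By a Foster-Lyapunov argument, a nonnegative V with
  Qbar V + f + 1 <= 0 outside a finite set can be corrected on that set into a Lyapunov function
  that bounds the expected holding time, and the expected f-cost, accumulated during an excursion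
  from a state.  As the holding time in j is at least of order 1/j and the chain climbs slowly,
  excursions end almost surely.  This gives positive recurrence, the stationary distribution as
  the normalised expected occupation measure of an excursion (it is the only one), and
  E f(X) < infinity.

  For V(j) = C j^q (log (j + K))^(-r) with K large, V is concave, so Jensen's inequality for the
  binomial downward jumps gives Qbar V(j) <= C p (V(p j + 1 - p) - V(j) + (j + 1) V'(j)).  This
  behaves like (p^q - 1 + q) C p V(j) when r = 0, and like -r (1 + (1 - q) log p) C p V(j) / log j
  when p^q = 1 - q; both coefficients are negative under the respective hypotheses.
*)

theory Submission
  imports Defs "HOL-Real_Asymp.Real_Asymp"
begin

lemma has_sum_sum:
  fixes f :: "'i \<Rightarrow> 'a \<Rightarrow> real"
  assumes "finite I" "\<And>j. j \<in> I \<Longrightarrow> (f j has_sum s j) A"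
  shows "((\<lambda>x. \<Sum>j\<in>I. f j x) has_sum (\<Sum>j\<in>I. s j)) A"
  using assms by (induction I rule: finite_induct) (auto intro: has_sum_add)

lemma has_sum_diff:
  fixes f g :: "'a \<Rightarrow> real"
  assumes "(f has_sum a) A" "(g has_sum b) A"
  shows "((\<lambda>x. f x - g x) has_sum (a - b)) A"
  using has_sum_add[OF assms(1) has_sum_uminusI[OF assms(2)]] by simp

lemma has_sum_UNION_nat_nonneg:
  fixes \<phi> :: "'a \<Rightarrow> real" and T :: "nat \<Rightarrow> 'a set"
  assumes disj: "\<And>n m. n \<noteq> m \<Longrightarrow> T n \<inter> T m = {}"
    and nonneg: "\<And>x. x \<in> (\<Union>n. T n) \<Longrightarrow> 0 \<le> \<phi> x"
    and pieces: "\<And>n. (\<phi> has_sum s n) (T n)"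
    and summable: "summable s"
  shows "(\<phi> has_sum suminf s) (\<Union>n. T n)"
proof -
  have s_nonneg: "0 \<le> s n" for n
    by (rule has_sum_nonneg[OF pieces]) (use nonneg in auto)
  have s_has_sum: "(s has_sum suminf s) UNIV"
    by (rule sums_nonneg_imp_has_sum[OF summable_sums[OF summable] s_nonneg])
  have "\<phi> summable_on (\<Union>n\<in>UNIV. T n)"
    by (rule summable_on_UnionI[where g=s])
       (use pieces s_has_sum nonneg disj in \<open>auto simp: disjoint_family_on_def has_sum_imp_summable\<close>)
  then obtain tot where tot: "(\<phi> has_sum tot) (\<Union>n. T n)"
    by (auto simp: summable_on_def)
  have inj: "inj_on snd (SIGMA n:UNIV. T n)"
    using disj by (auto simp: inj_on_def)
  have "snd ` (SIGMA n:UNIV. T n) = (\<Union>n. T n)"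
    by force
  then have "((\<phi> \<circ> snd) has_sum tot) (SIGMA n:UNIV. T n)"
    using has_sum_reindex[OF inj, of \<phi> tot] tot by simp
  then have "((\<lambda>(n, x). \<phi> x) has_sum tot) (SIGMA n:UNIV. T n)"
    by (simp add: comp_def case_prod_unfold)
  from has_sum_Sigma'[OF this] pieces have "(s has_sum tot) UNIV"
    by simp
  with s_has_sum tot show ?thesis
    using has_sum_unique by blast
qed

lemma has_sum_suminf_swap_nonneg:
  fixes F :: "nat \<Rightarrow> 'a \<Rightarrow> real"
  assumes nonneg: "\<And>n j. j \<in> S \<Longrightarrow> 0 \<le> F n j"
    and rows: "\<And>n. (F n has_sum G n) S"
    and cols: "\<And>j. j \<in> S \<Longrightarrow> (\<lambda>n. F n j) sums H j"
    and summable: "summable G"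
  shows "(H has_sum suminf G) S"
proof -
  have G_nonneg: "0 \<le> G n" for n
    by (rule has_sum_nonneg[OF rows]) (use nonneg in auto)
  have G_has_sum: "(G has_sum suminf G) UNIV"
    by (rule sums_nonneg_imp_has_sum[OF summable_sums[OF summable] G_nonneg])
  have "(\<lambda>(n, j). F n j) summable_on UNIV \<times> S"
    by (rule summable_on_SigmaI[where g=G])
       (use rows G_has_sum nonneg in \<open>auto simp: has_sum_imp_summable\<close>)
  then obtain T where T: "((\<lambda>(n, j). F n j) has_sum T) (UNIV \<times> S)"
    by (auto simp: summable_on_def)
  have "(G has_sum T) UNIV"
    by (rule has_sum_Sigma'[OF T]) (use rows in simp)
  then have "T = suminf G"
    using G_has_sum has_sum_unique by blast
  have "((\<lambda>(j, n). F n j) has_sum T) (S \<times> UNIV)"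
    using has_sum_swap[THEN iffD1, OF T] by (simp add: case_prod_unfold)
  then have "(H has_sum T) S"
    by (rule has_sum_Sigma') (use sums_nonneg_imp_has_sum[OF cols nonneg] in simp)
  with \<open>T = suminf G\<close> show ?thesis
    by simp
qed

lemma has_sum_atLeast_1_delta:
  fixes v :: real
  assumes "1 \<le> k"
  shows "((\<lambda>j. if j = k then v else 0) has_sum v) {1::nat..}"
  by (rule has_sum_finite_neutralI[where B="{k}"]) (use assms in auto)

lemma sum_lessThan_le_first:
  fixes d :: "nat \<Rightarrow> real"
  assumes "0 \<le> d 0" "\<And>n. d (Suc n) \<le> 0"
  shows "(\<Sum>m<n. d m) \<le> d 0"
proof (cases n)
  case (Suc n')
  have "(\<Sum>m<n'. d (Suc m)) \<le> 0"
    by (rule sum_nonpos) (use assms(2) in auto)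
  then show ?thesis
    unfolding Suc sum.lessThan_Suc_shift by simp
qed (use assms(1) in simp)

lemma tendsto_zero_if_mult_bounded:
  fixes Z H :: "nat \<Rightarrow> real"
  assumes nonneg: "\<And>n. 0 \<le> Z n" and bounded: "\<And>n. Z n * H n \<le> B"
    and H: "filterlim H at_top sequentially"
  shows "Z \<longlonglongrightarrow> 0"
proof (rule tendsto_sandwich[where f="\<lambda>_. 0" and h="\<lambda>n. B / H n"])
  show "eventually (\<lambda>n. Z n \<le> B / H n) sequentially"
    using filterlim_at_top_dense[THEN iffD1, OF H, rule_format, of 0]
    by eventually_elim (use bounded in \<open>simp add: pos_le_divide_eq\<close>)
  show "(\<lambda>n. B / H n) \<longlonglongrightarrow> 0"
    by (rule tendsto_divide_0[OF tendsto_const filterlim_at_top_imp_at_infinity[OF H]])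
qed (use nonneg in auto)

lemma filterlim_sum_inverse_at_top:
  fixes \<Lambda> :: real
  assumes "0 < \<Lambda>"
  shows "filterlim (\<lambda>n. \<Sum>m<n. 1 / (\<Lambda> * real (i + m + 1))) at_top sequentially"
proof (rule filterlim_at_top_mono)
  show "filterlim (\<lambda>n. 1 / (\<Lambda> * real (i + 1)) * harm n) at_top sequentially"
    by (rule filterlim_tendsto_pos_mult_at_top[OF tendsto_const _ harm_at_top]) (use assms in simp)
  show "eventually (\<lambda>n. 1 / (\<Lambda> * real (i + 1)) * harm n \<le> (\<Sum>m<n. 1 / (\<Lambda> * real (i + m + 1)))) sequentially"
  proof (intro always_eventually allI)
    fix n
    have "1 / (\<Lambda> * real (i + 1)) * inverse (real (Suc m)) \<le> 1 / (\<Lambda> * real (i + m + 1))" for m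
    proof -
      have "real (i + m + 1) \<le> real (i + 1) * real (Suc m)"
        by (simp add: algebra_simps)
      then have "1 / (\<Lambda> * (real (i + 1) * real (Suc m))) \<le> 1 / (\<Lambda> * real (i + m + 1))"
        using assms by (intro divide_left_mono mult_left_mono mult_pos_pos) auto
      then show ?thesis
        by (simp add: divide_inverse mult.assoc)
    qed
    then show "1 / (\<Lambda> * real (i + 1)) * harm n \<le> (\<Sum>m<n. 1 / (\<Lambda> * real (i + m + 1)))"
      unfolding harm_altdef sum_distrib_left by (intro sum_mono) simp
  qed
qed

lemma sum_mult_if_eq_0:
  fixes S X :: "nat \<Rightarrow> real"
  assumes "i \<in> A" "finite A"
  shows "(\<Sum>k\<in>A. (if k = i then 0 else S k) * X k) = (\<Sum>k\<in>A. S k * X k) - S i * X i"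
proof -
  have "(if k = i then 0 else S k) * X k = S k * X k - (if k = i then S i * X i else 0)" for k
    by auto
  then show ?thesis
    using assms by (simp add: sum_subtractf)
qed

section \<open>Skip-free chains and taboo probabilities\<close>

locale skip_free_chain =
  fixes Q :: "nat \<Rightarrow> nat \<Rightarrow> real"
  assumes qrate_pos: "\<And>j. 1 \<le> j \<Longrightarrow> 0 < qrate Q j"
    and off_diag_nonneg: "\<And>j k. 1 \<le> j \<Longrightarrow> k \<noteq> j \<Longrightarrow> 0 \<le> Q j k"
    and rate_support: "\<And>j k. 1 \<le> j \<Longrightarrow> k = 0 \<or> j + 1 < k \<Longrightarrow> Q j k = 0"
    and row_sum: "\<And>j. 1 \<le> j \<Longrightarrow> (\<Sum>k\<in>{1..j+1}. Q j k) = 0"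
begin

abbreviation P :: "nat \<Rightarrow> nat \<Rightarrow> real" where
  "P \<equiv> jump_prob Q"

lemma jump_prob_eq: "1 \<le> j \<Longrightarrow> P j k = (if k = j then 0 else Q j k / qrate Q j)"
  using qrate_pos[of j] by (simp add: jump_prob_def)

lemma jump_prob_nonneg: "1 \<le> j \<Longrightarrow> 0 \<le> P j k"
  using qrate_pos[of j] off_diag_nonneg[of j k] by (simp add: jump_prob_eq)

lemma jump_prob_support:
  assumes "1 \<le> j" "P j k \<noteq> 0"
  shows "1 \<le> k \<and> k \<le> j + 1"
proof -
  have "Q j k \<noteq> 0"
    using assms by (auto simp: jump_prob_eq split: if_splits)
  then have "\<not> (k = 0 \<or> j + 1 < k)"
    using rate_support[OF assms(1)] by blast
  then show ?thesis
    by auto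
qed

definition jump_mean :: "nat \<Rightarrow> (nat \<Rightarrow> real) \<Rightarrow> real" where
  "jump_mean j X = (\<Sum>k\<in>{1..j+1}. P j k * X k)"

lemma jump_mean_eq:
  assumes j: "1 \<le> j"
  shows "jump_mean j X = (\<Sum>k\<in>{1..j+1}. Q j k * X k) / qrate Q j + X j"
proof -
  have "P j k * X k = Q j k * X k / qrate Q j - (if k = j then Q j j * X j / qrate Q j else 0)" for k
    using j by (simp add: jump_prob_eq)
  then have "jump_mean j X = (\<Sum>k\<in>{1..j+1}. Q j k * X k / qrate Q j) - Q j j * X j / qrate Q j"
    using j by (simp add: jump_mean_def sum_subtractf)
  also have "(\<Sum>k\<in>{1..j+1}. Q j k * X k / qrate Q j) = (\<Sum>k\<in>{1..j+1}. Q j k * X k) / qrate Q j"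
    by (simp only: sum_divide_distrib)
  also have "Q j j * X j / qrate Q j = - X j"
    using qrate_pos[OF j] by (simp add: qrate_def)
  finally show ?thesis
    by simp
qed

lemma jump_mean_one: "1 \<le> j \<Longrightarrow> jump_mean j (\<lambda>_. 1) = 1"
  using jump_mean_eq[of j "\<lambda>_. 1"] row_sum by simp

lemma jump_mean_nonneg: "1 \<le> j \<Longrightarrow> (\<And>k. 1 \<le> k \<Longrightarrow> 0 \<le> X k) \<Longrightarrow> 0 \<le> jump_mean j X"
  unfolding jump_mean_def by (rule sum_nonneg) (auto intro!: mult_nonneg_nonneg jump_prob_nonneg)

lemma jump_mean_superset:
  assumes "1 \<le> j" "finite A" "{1..j+1} \<subseteq> A"
  shows "(\<Sum>k\<in>A. P j k * X k) = jump_mean j X"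
  unfolding jump_mean_def
proof (rule sum.mono_neutral_right)
  show "\<forall>k\<in>A - {1..j + 1}. P j k * X k = 0"
    using jump_prob_support[OF assms(1)] by force
qed (use assms in auto)

text \<open>The jump chain started at \<open>i\<close>: \<open>taboo_prob i n k\<close> is the probability of being at \<open>k\<close>
  after \<open>n\<close> jumps without having returned to \<open>i\<close>, and \<open>taboo_cost c i n k\<close> is the expected
  cost \<open>c X\<^sub>0 + \<dots> + c X\<^sub>n\<close> on that event.  Both vanish outside \<open>{1..i+n}\<close>, as the chain
  climbs at most one state per jump, which is why the sums below are finite.\<close>

primrec taboo_prob :: "nat \<Rightarrow> nat \<Rightarrow> nat \<Rightarrow> real" where
  "taboo_prob i 0 k = (if k = i then 1 else 0)"
| "taboo_prob i (Suc n) k = (if k = i then 0 else (\<Sum>j\<in>{1..i+n}. taboo_prob i n j * P j k))"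

primrec taboo_cost :: "(nat \<Rightarrow> real) \<Rightarrow> nat \<Rightarrow> nat \<Rightarrow> nat \<Rightarrow> real" where
  "taboo_cost c i 0 k = (if k = i then c i else 0)"
| "taboo_cost c i (Suc n) k =
     (if k = i then 0 else (\<Sum>j\<in>{1..i+n}. taboo_cost c i n j * P j k)) + taboo_prob i (Suc n) k * c k"

definition return_prob :: "nat \<Rightarrow> nat \<Rightarrow> real" where
  "return_prob i n = (\<Sum>j\<in>{1..i+n}. taboo_prob i n j * P j i)"

definition return_cost :: "(nat \<Rightarrow> real) \<Rightarrow> nat \<Rightarrow> nat \<Rightarrow> real" where
  "return_cost c i n = (\<Sum>j\<in>{1..i+n}. taboo_cost c i n j * P j i)"

definition taboo_mean :: "(nat \<Rightarrow> real) \<Rightarrow> nat \<Rightarrow> nat \<Rightarrow> real" where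
  "taboo_mean c i n = (\<Sum>k\<in>{1..i+n}. taboo_prob i n k * c k)"

lemma taboo_prob_support: "1 \<le> i \<Longrightarrow> taboo_prob i n k \<noteq> 0 \<Longrightarrow> 1 \<le> k \<and> k \<le> i + n"
proof (induction n arbitrary: k)
  case (Suc n)
  then have "(\<Sum>j\<in>{1..i+n}. taboo_prob i n j * P j k) \<noteq> 0"
    by (auto split: if_splits)
  then obtain j where "j \<in> {1..i+n}" "P j k \<noteq> 0"
    by (rule sum.not_neutral_contains_not_neutral) auto
  then show ?case
    using jump_prob_support[of j k] by auto
qed (auto split: if_splits)

lemma taboo_prob_nonneg: "1 \<le> i \<Longrightarrow> 0 \<le> taboo_prob i n k"
  by (induction n arbitrary: k) (auto intro!: sum_nonneg mult_nonneg_nonneg jump_prob_nonneg)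

lemma taboo_prob_0_sum:
  assumes "finite A" "i \<in> A"
  shows "(\<Sum>k\<in>A. taboo_prob i 0 k * X k) = X i"
proof -
  have "(\<Sum>k\<in>A. taboo_prob i 0 k * X k) = (\<Sum>k\<in>A. if k = i then X k else 0)"
    by (rule sum.cong) auto
  then show ?thesis
    using assms by (simp add: sum.delta)
qed

lemma taboo_cost_support: "1 \<le> i \<Longrightarrow> taboo_cost c i n k \<noteq> 0 \<Longrightarrow> 1 \<le> k \<and> k \<le> i + n"
proof (induction n arbitrary: k)
  case (Suc n)
  then have "(\<Sum>j\<in>{1..i+n}. taboo_cost c i n j * P j k) \<noteq> 0 \<or> taboo_prob i (Suc n) k \<noteq> 0"
    by (auto split: if_splits)
  then show ?case
  proof
    assume "(\<Sum>j\<in>{1..i+n}. taboo_cost c i n j * P j k) \<noteq> 0"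
    then obtain j where "j \<in> {1..i+n}" "P j k \<noteq> 0"
      by (rule sum.not_neutral_contains_not_neutral) auto
    then show ?thesis
      using jump_prob_support[of j k] by auto
  next
    assume "taboo_prob i (Suc n) k \<noteq> 0"
    then show ?thesis
      using taboo_prob_support[OF Suc.prems(1)] by blast
  qed
qed (auto split: if_splits)

lemma taboo_cost_nonneg:
  assumes "1 \<le> i" "\<And>k. 1 \<le> k \<Longrightarrow> 0 \<le> c k" "1 \<le> k"
  shows "0 \<le> taboo_cost c i n k"
  using assms(3)
proof (induction n arbitrary: k)
  case (Suc n)
  have "0 \<le> (\<Sum>j\<in>{1..i+n}. taboo_cost c i n j * P j k)"
    using Suc.IH jump_prob_nonneg by (intro sum_nonneg mult_nonneg_nonneg) auto
  moreover have "0 \<le> taboo_prob i (Suc n) k * c k"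
    using taboo_prob_nonneg[OF assms(1)] assms(2)[OF Suc.prems] by (rule mult_nonneg_nonneg)
  ultimately show ?case
    by (auto simp del: taboo_prob.simps)
qed (use assms in auto)

lemma return_prob_nonneg: "1 \<le> i \<Longrightarrow> 0 \<le> return_prob i n"
  unfolding return_prob_def by (auto intro!: sum_nonneg mult_nonneg_nonneg taboo_prob_nonneg jump_prob_nonneg)

lemma return_cost_nonneg: "1 \<le> i \<Longrightarrow> (\<And>k. 1 \<le> k \<Longrightarrow> 0 \<le> c k) \<Longrightarrow> 0 \<le> return_cost c i n"
  unfolding return_cost_def by (auto intro!: sum_nonneg mult_nonneg_nonneg taboo_cost_nonneg jump_prob_nonneg)

lemma taboo_mean_nonneg: "1 \<le> i \<Longrightarrow> (\<And>k. 1 \<le> k \<Longrightarrow> 0 \<le> c k) \<Longrightarrow> 0 \<le> taboo_mean c i n"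
  unfolding taboo_mean_def by (auto intro!: sum_nonneg mult_nonneg_nonneg taboo_prob_nonneg)

lemma taboo_mean_0: "1 \<le> i \<Longrightarrow> taboo_mean c i 0 = c i"
  using taboo_prob_0_sum[of "{1..i}" i c] by (simp add: taboo_mean_def)

lemma sum_jump_mean_swap:
  fixes F X :: "nat \<Rightarrow> real"
  assumes "1 \<le> i" and support: "\<And>j. F j \<noteq> 0 \<Longrightarrow> 1 \<le> j \<and> j \<le> i + n"
  shows "(\<Sum>k\<in>{1..i+Suc n}. (\<Sum>j\<in>{1..i+n}. F j * P j k) * X k) = (\<Sum>j\<in>{1..i+n}. F j * jump_mean j X)"
proof -
  have "(\<Sum>k\<in>{1..i+Suc n}. (\<Sum>j\<in>{1..i+n}. F j * P j k) * X k)
      = (\<Sum>k\<in>{1..i+Suc n}. \<Sum>j\<in>{1..i+n}. F j * (P j k * X k))"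
    by (simp only: sum_distrib_right mult.assoc)
  also have "\<dots> = (\<Sum>j\<in>{1..i+n}. F j * (\<Sum>k\<in>{1..i+Suc n}. P j k * X k))"
    by (subst sum.swap) (simp only: sum_distrib_left)
  also have "\<dots> = (\<Sum>j\<in>{1..i+n}. F j * jump_mean j X)"
    by (intro sum.cong refl, subst jump_mean_superset) auto
  finally show ?thesis .
qed

lemma taboo_prob_Suc_sum:
  assumes "1 \<le> i"
  shows "(\<Sum>k\<in>{1..i+Suc n}. taboo_prob i (Suc n) k * X k)
       = (\<Sum>j\<in>{1..i+n}. taboo_prob i n j * (jump_mean j X - P j i * X i))"
proof -
  have "(\<Sum>k\<in>{1..i+Suc n}. taboo_prob i (Suc n) k * X k)
      = (\<Sum>k\<in>{1..i+Suc n}. (\<Sum>j\<in>{1..i+n}. taboo_prob i n j * P j k) * X k)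
        - (\<Sum>j\<in>{1..i+n}. taboo_prob i n j * P j i) * X i"
    unfolding taboo_prob.simps by (rule sum_mult_if_eq_0) (use assms in auto)
  also have "\<dots> = (\<Sum>j\<in>{1..i+n}. taboo_prob i n j * jump_mean j X)
        - (\<Sum>j\<in>{1..i+n}. taboo_prob i n j * P j i) * X i"
    by (subst sum_jump_mean_swap) (use assms taboo_prob_support in auto)
  finally show ?thesis
    by (simp add: sum_distrib_right right_diff_distrib sum_subtractf mult.assoc)
qed

lemma taboo_cost_Suc_sum:
  assumes "1 \<le> i"
  shows "(\<Sum>k\<in>{1..i+Suc n}. taboo_cost c i (Suc n) k * X k)
       = (\<Sum>j\<in>{1..i+n}. taboo_cost c i n j * (jump_mean j X - P j i * X i))
         + (\<Sum>k\<in>{1..i+Suc n}. taboo_prob i (Suc n) k * c k * X k)"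
proof -
  have "(\<Sum>k\<in>{1..i+Suc n}. taboo_cost c i (Suc n) k * X k)
      = (\<Sum>k\<in>{1..i+Suc n}. (if k = i then 0 else (\<Sum>j\<in>{1..i+n}. taboo_cost c i n j * P j k)) * X k)
        + (\<Sum>k\<in>{1..i+Suc n}. taboo_prob i (Suc n) k * c k * X k)"
    by (simp only: taboo_cost.simps distrib_right sum.distrib)
  also have "(\<Sum>k\<in>{1..i+Suc n}. (if k = i then 0 else (\<Sum>j\<in>{1..i+n}. taboo_cost c i n j * P j k)) * X k)
      = (\<Sum>k\<in>{1..i+Suc n}. (\<Sum>j\<in>{1..i+n}. taboo_cost c i n j * P j k) * X k)
        - (\<Sum>j\<in>{1..i+n}. taboo_cost c i n j * P j i) * X i"
    by (rule sum_mult_if_eq_0) (use assms in auto)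
  also have "\<dots> = (\<Sum>j\<in>{1..i+n}. taboo_cost c i n j * jump_mean j X)
        - (\<Sum>j\<in>{1..i+n}. taboo_cost c i n j * P j i) * X i"
    by (subst sum_jump_mean_swap) (use assms taboo_cost_support in auto)
  finally show ?thesis
    by (simp add: sum_distrib_right right_diff_distrib sum_subtractf mult.assoc)
qed

lemma taboo_mass_conservation:
  assumes "1 \<le> i"
  shows "(\<Sum>k\<in>{1..i+n}. taboo_prob i n k) + (\<Sum>m<n. return_prob i m) = 1"
proof (induction n)
  case 0
  show ?case
    using assms by (simp add: sum.delta)
next
  case (Suc n)
  have "(\<Sum>k\<in>{1..i+Suc n}. taboo_prob i (Suc n) k)
      = (\<Sum>j\<in>{1..i+n}. taboo_prob i n j * (jump_mean j (\<lambda>_. 1) - P j i))"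
    using taboo_prob_Suc_sum[OF assms, of n "\<lambda>_. 1"] by simp
  also have "\<dots> = (\<Sum>j\<in>{1..i+n}. taboo_prob i n j - taboo_prob i n j * P j i)"
    by (rule sum.cong) (auto simp: jump_mean_one algebra_simps)
  also have "\<dots> = (\<Sum>j\<in>{1..i+n}. taboo_prob i n j) - return_prob i n"
    by (simp only: sum_subtractf return_prob_def)
  finally show ?case
    using Suc.IH by simp
qed

lemma taboo_cost_mass_Suc:
  assumes i: "1 \<le> i"
  shows "(\<Sum>k\<in>{1..i+Suc n}. taboo_cost c i (Suc n) k)
       = (\<Sum>k\<in>{1..i+n}. taboo_cost c i n k) - return_cost c i n + taboo_mean c i (Suc n)"
proof -
  have "(\<Sum>k\<in>{1..i+Suc n}. taboo_cost c i (Suc n) k)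
      = (\<Sum>j\<in>{1..i+n}. taboo_cost c i n j * (jump_mean j (\<lambda>_. 1) - P j i)) + taboo_mean c i (Suc n)"
    using taboo_cost_Suc_sum[OF i, of c n "\<lambda>_. 1"] by (simp add: taboo_mean_def del: taboo_prob.simps)
  also have "\<dots> = (\<Sum>j\<in>{1..i+n}. taboo_cost c i n j) - return_cost c i n + taboo_mean c i (Suc n)"
    by (simp add: jump_mean_one right_diff_distrib sum_subtractf return_cost_def)
  finally show ?thesis .
qed

section \<open>Foster-Lyapunov bounds\<close>

definition lyapunov :: "(nat \<Rightarrow> real) \<Rightarrow> (nat \<Rightarrow> real) \<Rightarrow> nat \<Rightarrow> bool" where
  "lyapunov c W i \<longleftrightarrow>
     (\<forall>k\<ge>1. 0 \<le> W k) \<and> W i = 0 \<and> (\<forall>j\<ge>1. j \<noteq> i \<longrightarrow> c j + jump_mean j W \<le> W j)"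

lemma lyapunov_ge_cost: "lyapunov c W i \<Longrightarrow> 1 \<le> k \<Longrightarrow> k \<noteq> i \<Longrightarrow> c k \<le> W k"
  unfolding lyapunov_def using jump_mean_nonneg[of k W] by fastforce

definition taboo_drift :: "(nat \<Rightarrow> real) \<Rightarrow> (nat \<Rightarrow> real) \<Rightarrow> nat \<Rightarrow> nat \<Rightarrow> real" where
  "taboo_drift c W i n = (\<Sum>j\<in>{1..i+n}. taboo_prob i n j * (c j + jump_mean j W - W j))"

lemma lyapunov_telescope_le:
  assumes i: "1 \<le> i" and L: "lyapunov c W i" and "0 \<le> c i"
    and "M 0 = 0" and step: "\<And>m. M (Suc m) - M m = taboo_drift c W i m"
  shows "M n \<le> c i + jump_mean i W"
proof -
  have "W i = 0" and "0 \<le> jump_mean i W"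
    using L jump_mean_nonneg[OF i] by (auto simp: lyapunov_def)
  then have drift_0: "taboo_drift c W i 0 = c i + jump_mean i W"
    using taboo_prob_0_sum[of "{1..i}" i "\<lambda>j. c j + jump_mean j W - W j"] i
    by (simp add: taboo_drift_def)
  have "taboo_drift c W i (Suc m) \<le> 0" for m
    unfolding taboo_drift_def
  proof (rule sum_nonpos)
    fix j assume j: "j \<in> {1..i + Suc m}"
    show "taboo_prob i (Suc m) j * (c j + jump_mean j W - W j) \<le> 0"
    proof (cases "j = i")
      case False
      then have "c j + jump_mean j W - W j \<le> 0"
        using L j unfolding lyapunov_def by auto
      then show ?thesis
        by (rule mult_nonneg_nonpos[OF taboo_prob_nonneg[OF i]])
    qed simp
  qed
  then have "(\<Sum>m<n. taboo_drift c W i m) \<le> taboo_drift c W i 0"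
    using drift_0 \<open>0 \<le> c i\<close> \<open>0 \<le> jump_mean i W\<close> by (intro sum_lessThan_le_first) auto
  moreover have "M n = (\<Sum>m<n. taboo_drift c W i m)"
    using sum_lessThan_telescope[of M n] step \<open>M 0 = 0\<close> by simp
  ultimately show ?thesis
    using drift_0 by simp
qed

lemma taboo_mean_sum_bound:
  assumes i: "1 \<le> i" and L: "lyapunov c W i" and "0 \<le> c i"
  shows "(\<Sum>m<n. taboo_mean c i m) \<le> c i + jump_mean i W"
proof -
  have W: "W i = 0" "\<And>k. 1 \<le> k \<Longrightarrow> 0 \<le> W k"
    using L by (auto simp: lyapunov_def)
  define M where "M n = (\<Sum>m<n. taboo_mean c i m) + (\<Sum>k\<in>{1..i+n}. taboo_prob i n k * W k)" for n
  have "M n \<le> c i + jump_mean i W"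
  proof (rule lyapunov_telescope_le[OF i L \<open>0 \<le> c i\<close>])
    show "M 0 = 0"
      using taboo_prob_0_sum[of "{1..i}" i W] i W(1) by (simp add: M_def)
    show "M (Suc m) - M m = taboo_drift c W i m" for m
      using taboo_prob_Suc_sum[OF i, of m W] W(1)
      by (simp add: M_def taboo_drift_def taboo_mean_def sum.distrib[symmetric] algebra_simps)
  qed
  moreover have "0 \<le> (\<Sum>k\<in>{1..i+n}. taboo_prob i n k * W k)"
    using W(2) taboo_prob_nonneg[OF i] by (intro sum_nonneg mult_nonneg_nonneg) auto
  ultimately show ?thesis
    by (simp add: M_def)
qed

lemma return_cost_sum_bound:
  assumes i: "1 \<le> i" and L: "lyapunov c W i" and c: "\<And>k. 1 \<le> k \<Longrightarrow> 0 \<le> c k"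
  shows "(\<Sum>m<n. return_cost c i m) \<le> c i + jump_mean i W"
proof (cases n)
  case 0
  then show ?thesis
    using jump_mean_nonneg[OF i] L c[OF i] by (auto simp: lyapunov_def)
next
  case (Suc n')
  have W: "W i = 0"
    using L by (simp add: lyapunov_def)
  define M where "M n = (\<Sum>m<n. return_cost c i m) + (\<Sum>k\<in>{1..i+n}. taboo_cost c i n k)
      + (\<Sum>k\<in>{1..i+n}. taboo_prob i n k * (W k - c k))" for n
  have "M n \<le> c i + jump_mean i W"
  proof (rule lyapunov_telescope_le[OF i L c[OF i]])
    show "M 0 = 0"
      using taboo_prob_0_sum[of "{1..i}" i "\<lambda>k. W k - c k"] i W by (simp add: M_def sum.delta)
    show "M (Suc m) - M m = taboo_drift c W i m" for m
    proof -
      have "(\<Sum>k\<in>{1..i+Suc m}. taboo_prob i (Suc m) k * (W k - c k))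
          = (\<Sum>j\<in>{1..i+m}. taboo_prob i m j * jump_mean j W) - taboo_mean c i (Suc m)"
        using taboo_prob_Suc_sum[OF i, of m W] W
        by (simp add: taboo_mean_def right_diff_distrib sum_subtractf del: taboo_prob.simps)
      then show ?thesis
        unfolding M_def taboo_cost_mass_Suc[OF i] taboo_drift_def
        by (simp add: algebra_simps sum_subtractf sum.distrib del: taboo_prob.simps taboo_cost.simps)
    qed
  qed
  moreover have "0 \<le> (\<Sum>k\<in>{1..i+n}. taboo_cost c i n k)"
    using taboo_cost_nonneg[OF i c] by (intro sum_nonneg) auto
  moreover have "0 \<le> taboo_prob i n k * (W k - c k)" if "k \<in> {1..i+n}" for k
    using Suc that lyapunov_ge_cost[OF L, of k] taboo_prob_nonneg[OF i, of n k] by (cases "k = i") auto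
  then have "0 \<le> (\<Sum>k\<in>{1..i+n}. taboo_prob i n k * (W k - c k))"
    by (rule sum_nonneg)
  ultimately show ?thesis
    unfolding M_def by linarith
qed

lemma taboo_mass_div_le_taboo_mean:
  assumes i: "1 \<le> i" and \<Lambda>: "0 < \<Lambda>" and c_lower: "\<And>k. 1 \<le> k \<Longrightarrow> 1 / (\<Lambda> * real (k + 1)) \<le> c k"
  shows "(\<Sum>k\<in>{1..i+m}. taboo_prob i m k) / (\<Lambda> * real (i + m + 1)) \<le> taboo_mean c i m"
proof -
  have "(\<Sum>k\<in>{1..i+m}. taboo_prob i m k) / (\<Lambda> * real (i + m + 1))
      = (\<Sum>k\<in>{1..i+m}. taboo_prob i m k * (1 / (\<Lambda> * real (i + m + 1))))"
    by (simp add: sum_divide_distrib)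
  also have "\<dots> \<le> (\<Sum>k\<in>{1..i+m}. taboo_prob i m k * c k)"
  proof (rule sum_mono)
    fix k assume k: "k \<in> {1..i+m}"
    have "1 / (\<Lambda> * real (i + m + 1)) \<le> 1 / (\<Lambda> * real (k + 1))"
      using k \<Lambda> by (intro divide_left_mono mult_left_mono) auto
    also have "\<dots> \<le> c k"
      using c_lower k by auto
    finally show "taboo_prob i m k * (1 / (\<Lambda> * real (i + m + 1))) \<le> taboo_prob i m k * c k"
      by (rule mult_left_mono) (rule taboo_prob_nonneg[OF i])
  qed
  finally show ?thesis
    by (simp add: taboo_mean_def)
qed

text \<open>The Lyapunov function bounds the expected cost accumulated before the return to \<open>i\<close>. Since the
  chain climbs at most one state per jump, the cost up to step \<open>n\<close> is at least the probability of
  no return by step \<open>n\<close> times a partial sum of a divergent harmonic-type series.\<close>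

lemma return_prob_sums_1:
  assumes i: "1 \<le> i" and L: "lyapunov c W i" and c: "\<And>k. 1 \<le> k \<Longrightarrow> 0 \<le> c k"
    and \<Lambda>: "0 < \<Lambda>" and c_lower: "\<And>k. 1 \<le> k \<Longrightarrow> 1 / (\<Lambda> * real (k + 1)) \<le> c k"
  shows "return_prob i sums 1"
proof -
  define Z where "Z n = (\<Sum>k\<in>{1..i+n}. taboo_prob i n k)" for n
  define H where "H n = (\<Sum>m<n. 1 / (\<Lambda> * real (i + m + 1)))" for n
  have Z_eq: "Z n = 1 - (\<Sum>m<n. return_prob i m)" for n
    using taboo_mass_conservation[OF i, of n] by (simp add: Z_def)
  have Z_nonneg: "0 \<le> Z n" for n
    unfolding Z_def by (rule sum_nonneg) (use taboo_prob_nonneg[OF i] in auto)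
  have Z_antimono: "Z n \<le> Z m" if "m \<le> n" for m n
  proof -
    have "(\<Sum>k<m. return_prob i k) \<le> (\<Sum>k<n. return_prob i k)"
      by (rule sum_mono2) (use that return_prob_nonneg[OF i] in auto)
    then show ?thesis
      by (simp add: Z_eq)
  qed
  have bounded: "Z n * H n \<le> c i + jump_mean i W" for n
  proof -
    have "Z n * H n = (\<Sum>m<n. Z n / (\<Lambda> * real (i + m + 1)))"
      by (simp add: H_def sum_distrib_left)
    also have "\<dots> \<le> (\<Sum>m<n. Z m / (\<Lambda> * real (i + m + 1)))"
      by (rule sum_mono) (use Z_antimono \<Lambda> in \<open>auto intro!: divide_right_mono\<close>)
    also have "\<dots> \<le> (\<Sum>m<n. taboo_mean c i m)"
      unfolding Z_def by (intro sum_mono taboo_mass_div_le_taboo_mean[OF i \<Lambda> c_lower])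
    also have "\<dots> \<le> c i + jump_mean i W"
      by (rule taboo_mean_sum_bound[OF i L c[OF i]])
    finally show ?thesis .
  qed
  have "Z \<longlonglongrightarrow> 0"
    by (rule tendsto_zero_if_mult_bounded[OF Z_nonneg bounded])
       (unfold H_def, rule filterlim_sum_inverse_at_top[OF \<Lambda>])
  then have "(\<lambda>n. 1 - Z n) \<longlonglongrightarrow> 1"
    using tendsto_diff[OF tendsto_const, of Z 0 sequentially 1] by simp
  then show ?thesis
    unfolding sums_def by (simp add: Z_eq)
qed

end

section \<open>First-return paths and positive recurrence\<close>

definition taboo_paths :: "nat \<Rightarrow> nat \<Rightarrow> nat list set" where
  "taboo_paths i n = {ys. length ys = n \<and> set ys \<subseteq> {1..} - {i}}"

lemma taboo_paths_0 [simp]: "taboo_paths i 0 = {[]}"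
  by (auto simp: taboo_paths_def)

lemma taboo_paths_disjoint: "n \<noteq> m \<Longrightarrow> taboo_paths i n \<inter> taboo_paths i m = {}"
  by (auto simp: taboo_paths_def)

lemma last_taboo_path_ge_1: "1 \<le> i \<Longrightarrow> ys \<in> taboo_paths i n \<Longrightarrow> 1 \<le> last (i # ys)"
  by (cases ys rule: rev_cases) (auto simp: taboo_paths_def)

lemma last_taboo_path_Suc_neq: "ys \<in> taboo_paths i (Suc n) \<Longrightarrow> last (i # ys) \<noteq> i"
  by (cases ys rule: rev_cases) (auto simp: taboo_paths_def)

lemma has_sum_taboo_paths_Suc_self:
  "((\<lambda>ys. if last (i # ys) = i then \<phi> ys else 0) has_sum 0) (taboo_paths i (Suc n))"
proof (rule has_sum_0)
  fix ys assume "ys \<in> taboo_paths i (Suc n)"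
  then have "last (i # ys) \<noteq> i"
    by (rule last_taboo_path_Suc_neq)
  then show "(if last (i # ys) = i then \<phi> ys else 0) = 0"
    by (simp only: if_False)
qed

lemma has_sum_taboo_paths_snoc:
  fixes \<phi> :: "nat list \<Rightarrow> real"
  assumes "k \<noteq> i" "1 \<le> k"
  shows "((\<lambda>ys. if last (i # ys) = k then \<phi> ys else 0) has_sum s) (taboo_paths i (Suc n))
     \<longleftrightarrow> ((\<lambda>ys. \<phi> (ys @ [k])) has_sum s) (taboo_paths i n)"
proof -
  let ?f = "\<lambda>ys. if last (i # ys) = k then \<phi> ys else 0"
  have sub: "(\<lambda>ys. ys @ [k]) ` taboo_paths i n \<subseteq> taboo_paths i (Suc n)"
    using assms by (auto simp: taboo_paths_def)
  have outside: "?f ys = 0" if "ys \<in> taboo_paths i (Suc n) - (\<lambda>ys. ys @ [k]) ` taboo_paths i n" for ys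
  proof (rule ccontr)
    assume "?f ys \<noteq> 0"
    then have last: "last (i # ys) = k"
      by (auto split: if_splits)
    from that have ys: "length ys = Suc n" "set ys \<subseteq> {1..} - {i}"
      by (auto simp: taboo_paths_def)
    then obtain zs z where "ys = zs @ [z]"
      by (cases ys rule: rev_cases) auto
    with last ys have "ys \<in> (\<lambda>ys. ys @ [k]) ` taboo_paths i n"
      by (auto simp: taboo_paths_def)
    with that show False
      by blast
  qed
  have "(?f has_sum s) (taboo_paths i (Suc n)) \<longleftrightarrow> (?f has_sum s) ((\<lambda>ys. ys @ [k]) ` taboo_paths i n)"
    by (rule has_sum_cong_neutral) (use sub outside in auto)
  also have "\<dots> \<longleftrightarrow> ((?f \<circ> (\<lambda>ys. ys @ [k])) has_sum s) (taboo_paths i n)"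
    by (rule has_sum_reindex) (auto simp: inj_on_def)
  also have "\<dots> \<longleftrightarrow> ((\<lambda>ys. \<phi> (ys @ [k])) has_sum s) (taboo_paths i n)"
    by (rule has_sum_cong) auto
  finally show ?thesis .
qed

lemma path_prob_Nil [simp]: "path_prob Q j [] = 1"
  by (simp add: path_prob_def)

lemma path_prob_Cons: "path_prob Q j (x # xs) = jump_prob Q j x * path_prob Q x xs"
  by (simp add: path_prob_def)

lemma path_prob_snoc: "path_prob Q j (xs @ [x]) = path_prob Q j xs * jump_prob Q (last (j # xs)) x"
  by (induction xs arbitrary: j) (simp_all add: path_prob_Cons)

lemma path_time_snoc: "path_time Q i (ys @ [i]) = sum_list (map (\<lambda>a. 1 / qrate Q a) (i # ys))"
  by (simp add: path_time_def)

lemma first_return_paths_eq: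
  assumes "1 \<le> i"
  shows "first_return_paths {1..} i = (\<lambda>ys. ys @ [i]) ` (\<Union>n. taboo_paths i n)"
proof (intro equalityI subsetI)
  fix xs assume "xs \<in> first_return_paths {1..} i"
  then have xs: "xs \<noteq> []" "set xs \<subseteq> {1..}" "last xs = i" "i \<notin> set (butlast xs)"
    by (auto simp: first_return_paths_def)
  then have "xs = butlast xs @ [i]"
    by (metis append_butlast_last_id)
  moreover have "butlast xs \<in> taboo_paths i (length (butlast xs))"
    using xs in_set_butlastD by (fastforce simp: taboo_paths_def)
  ultimately show "xs \<in> (\<lambda>ys. ys @ [i]) ` (\<Union>n. taboo_paths i n)"
    by blast
next
  fix xs assume "xs \<in> (\<lambda>ys. ys @ [i]) ` (\<Union>n. taboo_paths i n)"
  then show "xs \<in> first_return_paths {1..} i"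
    using assms by (auto simp: first_return_paths_def taboo_paths_def)
qed

context skip_free_chain
begin

lemma path_prob_nonneg: "1 \<le> j \<Longrightarrow> set xs \<subseteq> {1..} \<Longrightarrow> 0 \<le> path_prob Q j xs"
  by (induction xs arbitrary: j) (auto simp: path_prob_Cons jump_prob_nonneg)

lemma path_prob_last:
  "1 \<le> j \<Longrightarrow> set xs \<subseteq> {1..} \<Longrightarrow> path_prob Q j xs \<noteq> 0 \<Longrightarrow> last (j # xs) \<le> j + length xs"
proof (induction xs arbitrary: j)
  case (Cons x xs)
  then have "P j x \<noteq> 0" "path_prob Q x xs \<noteq> 0"
    by (auto simp: path_prob_Cons)
  with Cons.prems jump_prob_support[of j x] have "x \<le> j + 1"
    by auto
  moreover have "last (x # xs) \<le> x + length xs"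
    using Cons.IH[of x] Cons.prems \<open>path_prob Q x xs \<noteq> 0\<close> by auto
  ultimately show ?case
    by simp
qed simp

lemma taboo_path_last_le:
  assumes "1 \<le> i" "ys \<in> taboo_paths i n" "path_prob Q i ys \<noteq> 0"
  shows "last (i # ys) \<le> i + n"
proof -
  have "set ys \<subseteq> {1..}" "length ys = n"
    using assms(2) by (auto simp: taboo_paths_def)
  then show ?thesis
    using path_prob_last[OF assms(1) _ assms(3)] by simp
qed

lemma has_sum_taboo_paths_last_step:
  fixes g :: "nat list \<Rightarrow> real"
  assumes i: "1 \<le> i"
    and g_last: "\<And>j. 1 \<le> j \<Longrightarrow> ((\<lambda>ys. if last (i # ys) = j then g ys else 0) has_sum G j) (taboo_paths i n)"
    and g_support: "\<And>ys. ys \<in> taboo_paths i n \<Longrightarrow> g ys \<noteq> 0 \<Longrightarrow> last (i # ys) \<le> i + n"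
  shows "((\<lambda>ys. g ys * P (last (i # ys)) k) has_sum (\<Sum>j\<in>{1..i+n}. G j * P j k)) (taboo_paths i n)"
proof -
  have eq: "g ys * P (last (i # ys)) k = (\<Sum>j\<in>{1..i+n}. (if last (i # ys) = j then g ys else 0) * P j k)"
    if ys: "ys \<in> taboo_paths i n" for ys
  proof (cases "g ys = 0")
    case False
    then have "last (i # ys) \<in> {1..i+n}"
      using g_support[OF ys] last_taboo_path_ge_1[OF i ys] by auto
    then show ?thesis
      by (simp add: if_distrib[where f="\<lambda>x. x * _"] sum.delta' cong: if_cong)
  qed (simp only: if_cancel mult_zero_left sum.neutral_const)
  have "((\<lambda>ys. \<Sum>j\<in>{1..i+n}. (if last (i # ys) = j then g ys else 0) * P j k)
      has_sum (\<Sum>j\<in>{1..i+n}. G j * P j k)) (taboo_paths i n)"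
  proof (rule has_sum_sum)
    fix j assume "j \<in> {1..i+n}"
    then show "((\<lambda>ys. (if last (i # ys) = j then g ys else 0) * P j k) has_sum G j * P j k) (taboo_paths i n)"
      by (intro has_sum_cmult_left g_last) simp
  qed simp
  then show ?thesis
    by (rule has_sum_cong[THEN iffD2, rotated]) (rule eq)
qed

lemma has_sum_taboo_prob_paths:
  assumes i: "1 \<le> i"
  shows "1 \<le> k \<Longrightarrow>
    ((\<lambda>ys. if last (i # ys) = k then path_prob Q i ys else 0) has_sum taboo_prob i n k) (taboo_paths i n)"
proof (induction n arbitrary: k)
  case 0
  then show ?case
    by (simp add: has_sum_finite_iff)
next
  case (Suc n)
  show ?case
  proof (cases "k = i")
    case True
    then have "taboo_prob i (Suc n) k = 0"
      by simp
    then show ?thesis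
      using has_sum_taboo_paths_Suc_self[of i "path_prob Q i" n] by (simp only: True)
  next
    case False
    have "((\<lambda>ys. path_prob Q i ys * P (last (i # ys)) k)
        has_sum (\<Sum>j\<in>{1..i+n}. taboo_prob i n j * P j k)) (taboo_paths i n)"
      by (rule has_sum_taboo_paths_last_step[OF i Suc.IH taboo_path_last_le[OF i]])
    then show ?thesis
      using has_sum_taboo_paths_snoc[OF False Suc.prems] False by (simp add: path_prob_snoc)
  qed
qed

lemma has_sum_taboo_cost_paths:
  assumes i: "1 \<le> i"
  shows "1 \<le> k \<Longrightarrow>
    ((\<lambda>ys. if last (i # ys) = k then path_prob Q i ys * sum_list (map c (i # ys)) else 0)
      has_sum taboo_cost c i n k) (taboo_paths i n)"
proof (induction n arbitrary: k)
  case 0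
  then show ?case
    by (simp add: has_sum_finite_iff)
next
  case (Suc n)
  show ?case
  proof (cases "k = i")
    case True
    then have "taboo_cost c i (Suc n) k = 0"
      by simp
    then show ?thesis
      using has_sum_taboo_paths_Suc_self[of i "\<lambda>ys. path_prob Q i ys * sum_list (map c (i # ys))" n]
      by (simp only: True)
  next
    case False
    have cost: "((\<lambda>ys. (path_prob Q i ys * sum_list (map c (i # ys))) * P (last (i # ys)) k)
        has_sum (\<Sum>j\<in>{1..i+n}. taboo_cost c i n j * P j k)) (taboo_paths i n)"
      by (rule has_sum_taboo_paths_last_step[OF i Suc.IH]) (use taboo_path_last_le[OF i] in auto)
    have prob: "((\<lambda>ys. path_prob Q i ys * P (last (i # ys)) k)
        has_sum (\<Sum>j\<in>{1..i+n}. taboo_prob i n j * P j k)) (taboo_paths i n)"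
      by (rule has_sum_taboo_paths_last_step[OF i has_sum_taboo_prob_paths[OF i] taboo_path_last_le[OF i]])
    have "((\<lambda>ys. path_prob Q i (ys @ [k]) * sum_list (map c (i # ys @ [k])))
        has_sum taboo_cost c i (Suc n) k) (taboo_paths i n)"
      using has_sum_add[OF cost has_sum_cmult_left[OF prob, of "c k"]] False
      by (simp add: path_prob_snoc algebra_simps)
    then show ?thesis
      using has_sum_taboo_paths_snoc[OF False Suc.prems] by simp
  qed
qed

lemma has_sum_first_return_prob:
  assumes i: "1 \<le> i" and returns: "return_prob i sums 1"
  shows "(path_prob Q i has_sum 1) (first_return_paths {1..} i)"
proof -
  have inj: "inj_on (\<lambda>ys. ys @ [i]) (\<Union>n. taboo_paths i n)"
    by (auto simp: inj_on_def)
  have pieces: "((\<lambda>ys. path_prob Q i (ys @ [i])) has_sum return_prob i n) (taboo_paths i n)" for n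
  proof -
    have "((\<lambda>ys. path_prob Q i ys * P (last (i # ys)) i)
        has_sum (\<Sum>j\<in>{1..i+n}. taboo_prob i n j * P j i)) (taboo_paths i n)"
      by (rule has_sum_taboo_paths_last_step[OF i has_sum_taboo_prob_paths[OF i] taboo_path_last_le[OF i]])
    then show ?thesis
      by (simp add: path_prob_snoc return_prob_def)
  qed
  have "((\<lambda>ys. path_prob Q i (ys @ [i])) has_sum suminf (return_prob i)) (\<Union>n. taboo_paths i n)"
    by (rule has_sum_UNION_nat_nonneg[OF taboo_paths_disjoint _ pieces sums_summable[OF returns]])
       (use i in \<open>auto intro!: path_prob_nonneg simp: taboo_paths_def\<close>)
  then show ?thesis
    unfolding first_return_paths_eq[OF i] has_sum_reindex[OF inj]
    using sums_unique[OF returns] by (simp add: comp_def)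
qed

lemma summable_first_return_time:
  assumes i: "1 \<le> i" and L: "lyapunov (\<lambda>k. 1 / qrate Q k) W i"
  shows "(\<lambda>xs. path_prob Q i xs * path_time Q i xs) summable_on (first_return_paths {1..} i)"
proof -
  define c where "c = (\<lambda>k. 1 / qrate Q k)"
  have c: "0 \<le> c k" if "1 \<le> k" for k
    using qrate_pos[OF that] by (simp add: c_def)
  have inj: "inj_on (\<lambda>ys. ys @ [i]) (\<Union>n. taboo_paths i n)"
    by (auto simp: inj_on_def)
  have pieces: "((\<lambda>ys. path_prob Q i (ys @ [i]) * path_time Q i (ys @ [i])) has_sum return_cost c i n)
      (taboo_paths i n)" for n
  proof -
    have "((\<lambda>ys. (path_prob Q i ys * sum_list (map c (i # ys))) * P (last (i # ys)) i)
        has_sum (\<Sum>j\<in>{1..i+n}. taboo_cost c i n j * P j i)) (taboo_paths i n)"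
      by (rule has_sum_taboo_paths_last_step[OF i has_sum_taboo_cost_paths[OF i]])
         (use taboo_path_last_le[OF i] in auto)
    then show ?thesis
      by (simp add: path_prob_snoc return_cost_def path_time_snoc c_def algebra_simps)
  qed
  have summable: "summable (return_cost c i)"
    by (rule summableI_nonneg_bounded[where x="c i + jump_mean i W"])
       (use return_cost_nonneg[OF i c] return_cost_sum_bound[OF i _ c] L in \<open>auto simp: c_def\<close>)
  have "((\<lambda>ys. path_prob Q i (ys @ [i]) * path_time Q i (ys @ [i]))
      has_sum suminf (return_cost c i)) (\<Union>n. taboo_paths i n)"
  proof (rule has_sum_UNION_nat_nonneg[OF taboo_paths_disjoint _ pieces summable])
    fix ys assume "ys \<in> (\<Union>n. taboo_paths i n)"
    then have ys: "set ys \<subseteq> {1..}"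
      by (auto simp: taboo_paths_def)
    have "0 \<le> path_time Q i (ys @ [i])"
      unfolding path_time_snoc using i ys qrate_pos by (intro sum_list_nonneg) (auto simp: less_imp_le)
    moreover have "0 \<le> path_prob Q i (ys @ [i])"
      using path_prob_nonneg[OF i] ys i by simp
    ultimately show "0 \<le> path_prob Q i (ys @ [i]) * path_time Q i (ys @ [i])"
      by simp
  qed
  then show ?thesis
    unfolding first_return_paths_eq[OF i] summable_on_reindex[OF inj]
    by (auto simp: comp_def summable_on_def)
qed

end

lemma has_sum_atLeast_1_finite_support:
  fixes F :: "nat \<Rightarrow> real"
  assumes "\<And>j. F j \<noteq> 0 \<Longrightarrow> 1 \<le> j \<and> j \<le> m"
  shows "(F has_sum (\<Sum>j\<in>{1..m}. F j)) {1..}"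
  by (rule has_sum_finite_neutralI) (use assms in auto)

context skip_free_chain
begin

definition taboo_visits :: "nat \<Rightarrow> nat \<Rightarrow> real" where
  "taboo_visits i k = (\<Sum>n. taboo_prob i n k)"

lemma taboo_mean_summable:
  assumes i: "1 \<le> i" and L: "lyapunov c W i" and c: "\<And>k. 1 \<le> k \<Longrightarrow> 0 \<le> c k"
  shows "summable (taboo_mean c i)"
  by (rule summableI_nonneg_bounded[where x="c i + jump_mean i W"])
     (use taboo_mean_nonneg[OF i c] taboo_mean_sum_bound[OF i L c[OF i]] in auto)

lemma taboo_prob_mult_le_taboo_mean:
  assumes i: "1 \<le> i" and c: "\<And>k. 1 \<le> k \<Longrightarrow> 0 \<le> c k"
  shows "taboo_prob i n k * c k \<le> taboo_mean c i n"
proof (cases "k \<in> {1..i+n}")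
  case True
  show ?thesis
    unfolding taboo_mean_def
    by (rule member_le_sum[OF True]) (use taboo_prob_nonneg[OF i] c in auto)
next
  case False
  then have "taboo_prob i n k = 0"
    using taboo_prob_support[OF i] by force
  then show ?thesis
    using taboo_mean_nonneg[OF i c] by simp
qed

lemma taboo_prob_summable:
  assumes i: "1 \<le> i" and L: "lyapunov c W i" and c: "\<And>k. 1 \<le> k \<Longrightarrow> 0 < c k"
  shows "summable (\<lambda>n. taboo_prob i n k)"
proof (cases "1 \<le> k")
  case False
  then have "taboo_prob i n k = 0" for n
    using taboo_prob_support[OF i] by force
  then show ?thesis
    by simp
next
  case True
  have c_nonneg: "\<And>k. 1 \<le> k \<Longrightarrow> 0 \<le> c k"
    using c less_imp_le by blast
  show ?thesis
  proof (rule summable_comparison_test'[where g="\<lambda>n. taboo_mean c i n / c k" and N=0])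
    show "summable (\<lambda>n. taboo_mean c i n / c k)"
      using taboo_mean_summable[OF i L c_nonneg] by (rule summable_divide)
    show "norm (taboo_prob i n k) \<le> taboo_mean c i n / c k" for n
      using taboo_prob_mult_le_taboo_mean[OF i c_nonneg, where n=n and k=k] taboo_prob_nonneg[OF i] c[OF True]
      by (simp add: pos_le_divide_eq)
  qed
qed

lemma taboo_visits_self: "1 \<le> i \<Longrightarrow> taboo_visits i i = 1"
proof -
  have "taboo_prob i n i = (if n = 0 then 1 else 0)" for n
    by (cases n) auto
  then show ?thesis
    unfolding taboo_visits_def using sums_single[of 0 "\<lambda>_. 1::real"] by (simp add: sums_iff)
qed

lemma taboo_visits_nonneg: "1 \<le> i \<Longrightarrow> summable (\<lambda>n. taboo_prob i n k) \<Longrightarrow> 0 \<le> taboo_visits i k"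
  unfolding taboo_visits_def by (rule suminf_nonneg) (auto intro: taboo_prob_nonneg)

lemma has_sum_taboo_visits_cost:
  assumes i: "1 \<le> i" and summable: "\<And>k. summable (\<lambda>n. taboo_prob i n k)"
    and mean_summable: "summable (taboo_mean c i)" and c: "\<And>k. 1 \<le> k \<Longrightarrow> 0 \<le> c k"
  shows "((\<lambda>j. taboo_visits i j * c j) has_sum suminf (taboo_mean c i)) {1..}"
proof (rule has_sum_suminf_swap_nonneg[where F="\<lambda>n j. taboo_prob i n j * c j" and G="taboo_mean c i"])
  show "((\<lambda>j. taboo_prob i n j * c j) has_sum taboo_mean c i n) {1..}" for n
    unfolding taboo_mean_def
    by (rule has_sum_atLeast_1_finite_support) (use taboo_prob_support[OF i] in force)
  show "(\<lambda>n. taboo_prob i n j * c j) sums (taboo_visits i j * c j)" for j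
    unfolding taboo_visits_def by (rule sums_mult2[OF summable_sums[OF summable]])
qed (use taboo_prob_nonneg[OF i] c mean_summable in auto)

lemma taboo_visits_invariant:
  assumes i: "1 \<le> i" and summable: "\<And>k. summable (\<lambda>n. taboo_prob i n k)"
    and returns: "return_prob i sums 1" and k: "1 \<le> k"
  shows "((\<lambda>j. taboo_visits i j * P j k) has_sum taboo_visits i k) {1..}"
proof -
  define R where "R = (\<lambda>n. \<Sum>j\<in>{1..i+n}. taboo_prob i n j * P j k)"
  have "R sums taboo_visits i k"
  proof (cases "k = i")
    case True
    then have "R = return_prob i"
      by (auto simp: R_def return_prob_def)
    then show ?thesis
      using returns taboo_visits_self[OF i] True by simp
  next
    case False
    have "(\<lambda>n. taboo_prob i n k) sums taboo_visits i k"
      unfolding taboo_visits_def by (rule summable_sums[OF summable])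
    then show ?thesis
      using sums_Suc_iff[of "\<lambda>n. taboo_prob i n k" "taboo_visits i k"] False by (simp add: R_def)
  qed
  moreover have "((\<lambda>j. taboo_visits i j * P j k) has_sum suminf R) {1..}"
  proof (rule has_sum_suminf_swap_nonneg[where F="\<lambda>n j. taboo_prob i n j * P j k"])
    show "((\<lambda>j. taboo_prob i n j * P j k) has_sum R n) {1..}" for n
      unfolding R_def by (rule has_sum_atLeast_1_finite_support) (use taboo_prob_support[OF i] in force)
    show "(\<lambda>n. taboo_prob i n j * P j k) sums (taboo_visits i j * P j k)" for j
      unfolding taboo_visits_def by (rule sums_mult2[OF summable_sums[OF summable]])
  qed (use taboo_prob_nonneg[OF i] jump_prob_nonneg \<open>R sums taboo_visits i k\<close> in \<open>auto dest: sums_summable\<close>)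
  ultimately show ?thesis
    using sums_unique by fastforce
qed

lemma stationary_balance_iff:
  assumes k: "1 \<le> k"
  shows "((\<lambda>j. \<pi> j * Q j k) has_sum 0) {1..}
     \<longleftrightarrow> ((\<lambda>j. \<pi> j * qrate Q j * P j k) has_sum \<pi> k * qrate Q k) {1..}"
proof -
  have eq: "\<pi> j * Q j k = \<pi> j * qrate Q j * P j k - (if j = k then \<pi> k * qrate Q k else 0)"
    if "j \<in> {1..}" for j
    using that qrate_pos[of j] by (auto simp: jump_prob_eq qrate_def)
  have delta: "((\<lambda>j. if j = k then \<pi> k * qrate Q k else 0) has_sum \<pi> k * qrate Q k) {1..}"
    by (rule has_sum_atLeast_1_delta[OF k])
  show ?thesis
  proof
    assume "((\<lambda>j. \<pi> j * Q j k) has_sum 0) {1..}"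
    then have "((\<lambda>j. \<pi> j * qrate Q j * P j k - (if j = k then \<pi> k * qrate Q k else 0)) has_sum 0) {1..}"
      using has_sum_cong[of "{1..}"] eq by (metis (no_types, lifting))
    from has_sum_add[OF this delta] show "((\<lambda>j. \<pi> j * qrate Q j * P j k) has_sum \<pi> k * qrate Q k) {1..}"
      by simp
  next
    assume "((\<lambda>j. \<pi> j * qrate Q j * P j k) has_sum \<pi> k * qrate Q k) {1..}"
    from has_sum_diff[OF this delta] show "((\<lambda>j. \<pi> j * Q j k) has_sum 0) {1..}"
      using has_sum_cong[of "{1..}"] eq by (metis (no_types, lifting) diff_self)
  qed
qed

lemma taboo_prob_partial_sum_Suc:
  assumes i: "1 \<le> i" and "k \<noteq> i"
  shows "(\<Sum>n<Suc N. taboo_prob i n k) = (\<Sum>j\<in>{1..i+N}. (\<Sum>n<N. taboo_prob i n j) * P j k)"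
proof -
  have "(\<Sum>n<Suc N. taboo_prob i n k) = (\<Sum>n<N. taboo_prob i (Suc n) k)"
    unfolding sum.lessThan_Suc_shift using \<open>k \<noteq> i\<close> by simp
  also have "\<dots> = (\<Sum>n<N. \<Sum>j\<in>{1..i+N}. taboo_prob i n j * P j k)"
  proof (rule sum.cong[OF refl])
    fix n assume "n \<in> {..<N}"
    then have "(\<Sum>j\<in>{1..i+n}. taboo_prob i n j * P j k) = (\<Sum>j\<in>{1..i+N}. taboo_prob i n j * P j k)"
      by (intro sum.mono_neutral_left) (use taboo_prob_support[OF i, of n] in force)+
    then show "taboo_prob i (Suc n) k = (\<Sum>j\<in>{1..i+N}. taboo_prob i n j * P j k)"
      using \<open>k \<noteq> i\<close> by simp
  qed
  also have "\<dots> = (\<Sum>j\<in>{1..i+N}. (\<Sum>n<N. taboo_prob i n j) * P j k)"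
    by (simp add: sum.swap[of _ "{..<N}"] sum_distrib_right)
  finally show ?thesis .
qed

lemma invariant_ge_taboo_prob_partial_sum:
  assumes i: "1 \<le> i" and \<mu>_nonneg: "\<And>j. 1 \<le> j \<Longrightarrow> 0 \<le> \<mu> j"
    and invariant: "\<And>k. 1 \<le> k \<Longrightarrow> ((\<lambda>j. \<mu> j * P j k) has_sum \<mu> k) {1..}"
    and k: "1 \<le> k"
  shows "\<mu> i * (\<Sum>n<N. taboo_prob i n k) \<le> \<mu> k"
  using k
proof (induction N arbitrary: k)
  case 0
  then show ?case
    using \<mu>_nonneg by simp
next
  case (Suc N)
  show ?case
  proof (cases "k = i")
    case True
    have "(\<Sum>n<Suc N. taboo_prob i n k) = 1"
      unfolding sum.lessThan_Suc_shift using True by simp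
    then show ?thesis
      using True by simp
  next
    case False
    have "\<mu> i * (\<Sum>n<Suc N. taboo_prob i n k)
        = (\<Sum>j\<in>{1..i+N}. (\<mu> i * (\<Sum>n<N. taboo_prob i n j)) * P j k)"
      unfolding taboo_prob_partial_sum_Suc[OF i False] by (subst sum_distrib_left) (simp only: mult.assoc)
    also have "\<dots> \<le> (\<Sum>j\<in>{1..i+N}. \<mu> j * P j k)"
      by (intro sum_mono mult_right_mono) (use Suc.IH jump_prob_nonneg in auto)
    also have "\<dots> \<le> \<mu> k"
      by (rule finite_sum_le_has_sum[OF invariant[OF Suc.prems]])
         (use \<mu>_nonneg jump_prob_nonneg in auto)
    finally show ?thesis .
  qed
qed

lemma invariant_ge_taboo_visits:
  assumes i: "1 \<le> i" and \<mu>_nonneg: "\<And>j. 1 \<le> j \<Longrightarrow> 0 \<le> \<mu> j"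
    and invariant: "\<And>k. 1 \<le> k \<Longrightarrow> ((\<lambda>j. \<mu> j * P j k) has_sum \<mu> k) {1..}"
    and summable: "\<And>k. summable (\<lambda>n. taboo_prob i n k)" and k: "1 \<le> k"
  shows "\<mu> i * taboo_visits i k \<le> \<mu> k"
proof -
  have "\<mu> i * taboo_visits i k = (\<Sum>n. \<mu> i * taboo_prob i n k)"
    unfolding taboo_visits_def by (rule suminf_mult[OF summable, symmetric])
  also have "\<dots> \<le> \<mu> k"
    by (rule suminf_le_const[OF summable_mult[OF summable]])
       (use invariant_ge_taboo_prob_partial_sum[OF i \<mu>_nonneg invariant k] in \<open>simp add: sum_distrib_left\<close>)
  finally show ?thesis .
qed

end

locale linear_rate_chain = skip_free_chain +
  fixes \<Lambda> :: real
  assumes rate_bound_pos: "0 < \<Lambda>"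
    and qrate_le: "\<And>k. 1 \<le> k \<Longrightarrow> qrate Q k \<le> \<Lambda> * real (k + 1)"
begin

lemma lyapunov_return_prob_sums_1:
  assumes i: "1 \<le> i" and L: "lyapunov (\<lambda>k. 1 / qrate Q k) W i"
  shows "return_prob i sums 1"
proof (rule return_prob_sums_1[OF i L _ rate_bound_pos])
  show "0 \<le> 1 / qrate Q k" if "1 \<le> k" for k
    using qrate_pos[OF that] by simp
  show "1 / (\<Lambda> * real (k + 1)) \<le> 1 / qrate Q k" if "1 \<le> k" for k
    using qrate_pos[OF that] qrate_le[OF that] by (intro divide_left_mono) (use rate_bound_pos in auto)
qed

lemma positive_recurrent_stateI:
  assumes i: "1 \<le> i" and L: "lyapunov (\<lambda>k. 1 / qrate Q k) W i"
  shows "positive_recurrent_state Q {1..} i"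
  unfolding positive_recurrent_state_def
  using qrate_pos[OF i] has_sum_first_return_prob[OF i lyapunov_return_prob_sums_1[OF i L]]
    summable_first_return_time[OF i L] by blast

lemma lyapunov_taboo_prob_summable:
  "1 \<le> i \<Longrightarrow> lyapunov (\<lambda>k. 1 / qrate Q k) W i \<Longrightarrow> summable (\<lambda>n. taboo_prob i n k)"
  by (rule taboo_prob_summable) (use qrate_pos in auto)

lemma stationary_distribution_exists:
  assumes i: "1 \<le> i" and L: "lyapunov (\<lambda>k. 1 / qrate Q k) W i"
  shows "\<exists>\<pi>. stationary_distribution Q {1..} \<pi>"
proof -
  define c where "c = (\<lambda>k. 1 / qrate Q k)"
  have c: "0 \<le> c k" if "1 \<le> k" for k
    using qrate_pos[OF that] by (simp add: c_def)
  have summable: "summable (\<lambda>n. taboo_prob i n k)" for k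
    using lyapunov_taboo_prob_summable[OF i L] .
  have mean_summable: "summable (taboo_mean c i)"
    using taboo_mean_summable[OF i _ c] L by (simp add: c_def)
  define m where "m = suminf (taboo_mean c i)"
  have "c i \<le> m"
    using sum_le_suminf[OF mean_summable, of "{..<1}"] taboo_mean_nonneg[OF i c] taboo_mean_0[OF i]
    by (simp add: m_def)
  moreover have "0 < c i"
    using qrate_pos[OF i] by (simp add: c_def)
  ultimately have m_pos: "0 < m"
    by linarith
  define \<pi> where "\<pi> j = taboo_visits i j * c j / m" for j
  have "\<forall>j\<in>{1..}. 0 \<le> \<pi> j"
    unfolding \<pi>_def using taboo_visits_nonneg[OF i summable] c m_pos by auto
  moreover have "(\<pi> has_sum 1) {1..}"
    using has_sum_cmult_left[OF has_sum_taboo_visits_cost[OF i summable mean_summable c], of "1 / m"] m_pos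
    unfolding \<pi>_def m_def by simp
  moreover have "((\<lambda>j. \<pi> j * Q j k) has_sum 0) {1..}" if k: "k \<in> {1..}" for k
  proof -
    have "\<pi> j * qrate Q j = taboo_visits i j / m" if "1 \<le> j" for j
      using qrate_pos[OF that] by (simp add: \<pi>_def c_def)
    then have "((\<lambda>j. \<pi> j * qrate Q j * P j k) has_sum \<pi> k * qrate Q k) {1..}"
      using has_sum_cmult_left[OF taboo_visits_invariant[OF i summable lyapunov_return_prob_sums_1[OF i L]],
          of k "1 / m"] k
      by (auto intro: has_sum_cong[THEN iffD2])
    then show ?thesis
      using stationary_balance_iff k by simp
  qed
  ultimately show ?thesis
    unfolding stationary_distribution_def by blast
qed

text \<open>Uniqueness: \<open>\<mu> = \<pi> \<cdot> qrate Q\<close> is an invariant measure of the jump chain, and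
  \<open>\<mu> - \<mu> i \<cdot> taboo_visits i\<close> is a nonnegative invariant measure vanishing at \<open>i\<close>, so it
  vanishes wherever \<open>i\<close> can be reached in one jump.\<close>

lemma stationary_eq_taboo_visits:
  assumes i: "1 \<le> i" and L: "lyapunov (\<lambda>k. 1 / qrate Q k) W i"
    and irreducible: "\<And>j. 1 \<le> j \<Longrightarrow> j \<noteq> i \<Longrightarrow> 0 < P j i"
    and st: "stationary_distribution Q {1..} \<pi>" and j: "1 \<le> j"
  shows "\<pi> j * qrate Q j = \<pi> i * qrate Q i * taboo_visits i j"
proof -
  define \<mu> where "\<mu> j = \<pi> j * qrate Q j" for j
  have summable: "\<And>k. summable (\<lambda>n. taboo_prob i n k)"
    by (rule lyapunov_taboo_prob_summable[OF i L])
  have \<mu>_nonneg: "0 \<le> \<mu> j" if "1 \<le> j" for j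
    using st qrate_pos[OF that] that by (auto simp: \<mu>_def stationary_distribution_def)
  have \<mu>_invariant: "((\<lambda>j. \<mu> j * P j k) has_sum \<mu> k) {1..}" if "1 \<le> k" for k
    using st that stationary_balance_iff[OF that, of \<pi>] by (auto simp: \<mu>_def stationary_distribution_def)
  define \<nu> where "\<nu> k = \<mu> k - \<mu> i * taboo_visits i k" for k
  have \<nu>_nonneg: "0 \<le> \<nu> k" if "1 \<le> k" for k
    using invariant_ge_taboo_visits[OF i \<mu>_nonneg \<mu>_invariant summable that] by (simp add: \<nu>_def)
  have \<nu>_invariant: "((\<lambda>j. \<nu> j * P j i) has_sum \<nu> i) {1..}"
    using has_sum_diff[OF \<mu>_invariant[OF i] has_sum_cmult_right[OF taboo_visits_invariant[OF i summable
          lyapunov_return_prob_sums_1[OF i L] i], of "\<mu> i"]]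
    by (simp add: \<nu>_def algebra_simps)
  have "\<nu> i = 0"
    by (simp add: \<nu>_def taboo_visits_self[OF i])
  have "\<nu> j = 0"
  proof (cases "j = i")
    case False
    have "\<nu> j * P j i \<le> \<nu> i"
      using finite_sum_le_has_sum[OF \<nu>_invariant, of "{j}"] j \<nu>_nonneg jump_prob_nonneg by auto
    then have "\<nu> j \<le> 0"
      using \<open>\<nu> i = 0\<close> irreducible[OF j False] by (simp add: mult_le_0_iff)
    then show ?thesis
      using \<nu>_nonneg[OF j] by simp
  qed (use \<open>\<nu> i = 0\<close> in simp)
  then show ?thesis
    by (simp add: \<nu>_def \<mu>_def)
qed

lemma stationary_moment_summable:
  assumes i: "1 \<le> i" and L: "lyapunov (\<lambda>k. 1 / qrate Q k) W i"
    and irreducible: "\<And>j. 1 \<le> j \<Longrightarrow> j \<noteq> i \<Longrightarrow> 0 < P j i"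
    and f_nonneg: "\<And>k. 1 \<le> k \<Longrightarrow> 0 \<le> f k" and Lf: "lyapunov (\<lambda>k. f k / qrate Q k) W' i"
    and st: "stationary_distribution Q {1..} \<pi>"
  shows "(\<lambda>j. \<pi> j * f j) summable_on {1..}"
proof -
  define c where "c = (\<lambda>k. f k / qrate Q k)"
  have c: "0 \<le> c k" if "1 \<le> k" for k
    using f_nonneg[OF that] qrate_pos[OF that] by (simp add: c_def)
  have "((\<lambda>j. taboo_visits i j * c j) has_sum suminf (taboo_mean c i)) {1..}"
    by (rule has_sum_taboo_visits_cost[OF i lyapunov_taboo_prob_summable[OF i L] taboo_mean_summable[OF i _ c] c])
       (use Lf in \<open>simp add: c_def\<close>)
  then have "((\<lambda>j. \<pi> i * qrate Q i * (taboo_visits i j * c j))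
      has_sum \<pi> i * qrate Q i * suminf (taboo_mean c i)) {1..}"
    by (rule has_sum_cmult_right)
  moreover have "\<pi> i * qrate Q i * (taboo_visits i j * c j) = \<pi> j * f j" if "j \<in> {1..}" for j
    using stationary_eq_taboo_visits[OF i L irreducible st, of j] that qrate_pos[of j]
    by (simp add: c_def field_simps)
  ultimately show ?thesis
    unfolding summable_on_def using has_sum_cong by (metis (no_types, lifting))
qed

end

section \<open>Lyapunov functions from an eventual drift\<close>

definition ramp :: "nat \<Rightarrow> real \<Rightarrow> real \<Rightarrow> nat \<Rightarrow> real" where
  "ramp i a b j = (if j \<le> i then (a + 2 * b) / 2 ^ (i - j) - 2 * b else 0)"

lemma ramp_self [simp]: "ramp i a b i = a"
  by (simp add: ramp_def)

lemma ramp_above: "i < j \<Longrightarrow> ramp i a b j = 0"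
  by (simp add: ramp_def)

lemma ramp_Suc: "j < i \<Longrightarrow> ramp i a b j = ramp i a b (Suc j) / 2 - b"
proof -
  assume "j < i"
  then have "(2::real) ^ (i - j) = 2 * 2 ^ (i - Suc j)"
    by (simp add: Suc_diff_Suc power_Suc[symmetric])
  with \<open>j < i\<close> show ?thesis
    by (simp add: ramp_def field_simps)
qed

lemma ramp_nonneg:
  assumes "0 \<le> b" "2 ^ (i + 1) * b \<le> a"
  shows "0 \<le> ramp i a b j"
proof (cases "j \<le> i")
  case True
  have "(2::real) ^ (i - j) \<le> 2 ^ i"
    by (rule power_increasing) auto
  then have "2 * b * 2 ^ (i - j) \<le> 2 * b * 2 ^ i"
    using assms(1) by (intro mult_left_mono) auto
  also have "\<dots> \<le> a + 2 * b"
    using assms by (simp add: mult.commute mult.left_commute)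
  finally show ?thesis
    using True by (simp add: ramp_def pos_le_divide_eq)
qed (simp add: ramp_def)

lemma ramp_below_le:
  assumes "0 \<le> b" "0 \<le> a" "j < i"
  shows "ramp i a b j \<le> a / 2"
proof -
  have "(2::real) ^ 1 \<le> 2 ^ (i - j)"
    by (rule power_increasing) (use assms(3) in auto)
  then have "(a + 2 * b) / 2 ^ (i - j) \<le> (a + 2 * b) / 2"
    using assms by (intro divide_left_mono) auto
  then show ?thesis
    using assms by (simp add: ramp_def)
qed

context skip_free_chain
begin

lemma jump_mean_drift_iff:
  assumes j: "1 \<le> j"
  shows "c j + jump_mean j V \<le> V j \<longleftrightarrow> c j * qrate Q j + (\<Sum>k\<in>{1..j+1}. Q j k * V k) \<le> 0"
proof -
  have "c j + jump_mean j V \<le> V j \<longleftrightarrow> (c j + (\<Sum>k\<in>{1..j+1}. Q j k * V k) / qrate Q j) * qrate Q j \<le> 0"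
    unfolding jump_mean_eq[OF j] using qrate_pos[OF j] by (simp add: mult_le_0_iff)
  also have "(c j + (\<Sum>k\<in>{1..j+1}. Q j k * V k) / qrate Q j) * qrate Q j
      = c j * qrate Q j + (\<Sum>k\<in>{1..j+1}. Q j k * V k)"
    using qrate_pos[OF j] by (simp add: field_simps)
  finally show ?thesis .
qed

lemma jump_mean_ge_term:
  assumes "1 \<le> j" "\<And>k. 1 \<le> k \<Longrightarrow> 0 \<le> X k" "m \<in> {1..j+1}"
  shows "P j m * X m \<le> jump_mean j X"
  unfolding jump_mean_def by (rule member_le_sum[OF assms(3)]) (use assms jump_prob_nonneg in auto)

lemma lyapunov_add_const_minus:
  assumes i: "1 \<le> i" and V_nonneg: "\<And>k. 1 \<le> k \<Longrightarrow> 0 \<le> V k"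
    and d_nonneg: "\<And>k. 0 \<le> d k" and d_le: "\<And>k. 1 \<le> k \<Longrightarrow> d k \<le> V k + A" and d_i: "d i = V i + A"
    and drift: "\<And>j. 1 \<le> j \<Longrightarrow> j \<noteq> i \<Longrightarrow> c j + jump_mean j V - V j + d j \<le> jump_mean j d"
  shows "lyapunov c (\<lambda>j. V j + A - d j) i"
  unfolding lyapunov_def
proof (intro conjI allI impI)
  show "0 \<le> V k + A - d k" if "1 \<le> k" for k
    using d_le[OF that] by simp
  show "V i + A - d i = 0"
    using d_i by simp
  fix j :: nat assume j: "1 \<le> j" "j \<noteq> i"
  have "jump_mean j (\<lambda>j. V j + A - d j) = (\<Sum>k\<in>{1..j+1}. P j k * V k + A * P j k - P j k * d k)"
    unfolding jump_mean_def by (rule sum.cong) (auto simp: algebra_simps)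
  also have "\<dots> = jump_mean j V + A * jump_mean j (\<lambda>_. 1) - jump_mean j d"
    unfolding jump_mean_def by (simp only: sum.distrib sum_subtractf sum_distrib_left mult_1_right)
  finally show "c j + jump_mean j (\<lambda>j. V j + A - d j) \<le> V j + A - d j"
    using drift[OF j] jump_mean_one[OF j(1)] by simp
qed

lemma jump_mean_ramp_below:
  assumes j: "1 \<le> j" "j < i" and up: "1 / 2 \<le> P j (Suc j)"
    and b: "0 \<le> b" and a: "2 ^ (i + 1) * b \<le> a"
  shows "ramp i a b j + b \<le> jump_mean j (ramp i a b)"
proof -
  have "ramp i a b j + b = ramp i a b (Suc j) / 2"
    using ramp_Suc[OF j(2)] by simp
  also have "\<dots> \<le> P j (Suc j) * ramp i a b (Suc j)"
    using mult_right_mono[OF up ramp_nonneg[OF b a]] by simp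
  also have "\<dots> \<le> jump_mean j (ramp i a b)"
    by (rule jump_mean_ge_term) (use j ramp_nonneg[OF b a] in auto)
  finally show ?thesis .
qed

lemma jump_mean_ramp_above:
  assumes i: "1 \<le> i" and j: "i < j" and b: "0 \<le> b" and a: "2 ^ (i + 1) * b \<le> a"
  shows "P j i * a \<le> jump_mean j (ramp i a b)"
  using jump_mean_ge_term[of j "ramp i a b" i] i j ramp_nonneg[OF b a] by simp

text \<open>Above \<open>i\<close> the constant \<open>A\<close> pays, through the probability of jumping straight down to \<open>i\<close>,
  for the drift defect of \<open>V\<close>; below \<open>i\<close> the ramp, which halves at each step down, uses the
  probability of at least \<open>1/2\<close> of stepping up.\<close>

lemma lyapunov_add_const_minus_ramp:
  assumes i: "1 \<le> i" and V_nonneg: "\<And>k. 1 \<le> k \<Longrightarrow> 0 \<le> V k"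
    and up: "\<And>j. 1 \<le> j \<Longrightarrow> 1 / 2 \<le> P j (Suc j)"
    and B: "0 \<le> B" and A: "V i \<le> A" "2 ^ (i + 1) * B \<le> V i + A"
    and below: "\<And>j. 1 \<le> j \<Longrightarrow> j < i \<Longrightarrow> c j + jump_mean j V - V j \<le> B"
    and above: "\<And>j. i < j \<Longrightarrow> c j + jump_mean j V - V j \<le> A * P j i"
  shows "lyapunov c (\<lambda>j. V j + A - ramp i (V i + A) B j) i"
proof (rule lyapunov_add_const_minus[OF i V_nonneg])
  show "0 \<le> ramp i (V i + A) B k" for k
    by (rule ramp_nonneg[OF B A(2)])
  show "ramp i (V i + A) B k \<le> V k + A" if "1 \<le> k" for k
  proof (cases "k < i")
    case True
    then show ?thesis
      using ramp_below_le[OF B _ True, of "V i + A"] A(1) V_nonneg[OF i] V_nonneg[OF that] by simp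
  next
    case False
    then show ?thesis
      using V_nonneg[OF that] ramp_above[of i k] A(1) V_nonneg[OF i] by (cases "k = i") auto
  qed
  show "ramp i (V i + A) B i = V i + A"
    by simp
  show "c j + jump_mean j V - V j + ramp i (V i + A) B j \<le> jump_mean j (ramp i (V i + A) B)"
    if j: "1 \<le> j" "j \<noteq> i" for j
  proof (cases "j < i")
    case True
    then show ?thesis
      using below[OF j(1) True] jump_mean_ramp_below[OF j(1) True up[OF j(1)] B A(2)] by simp
  next
    case False
    then have "i < j"
      using j by simp
    have "A * P j i \<le> P j i * (V i + A)"
      using V_nonneg[OF i] jump_prob_nonneg[OF j(1), of i] by (simp add: algebra_simps)
    then show ?thesis
      using above[OF \<open>i < j\<close>] jump_mean_ramp_above[OF i \<open>i < j\<close> B A(2)] ramp_above[OF \<open>i < j\<close>]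
      by simp
  qed
qed

lemma lyapunov_exists:
  assumes i: "1 \<le> i" and V_nonneg: "\<And>k. 1 \<le> k \<Longrightarrow> 0 \<le> V k"
    and drift: "\<And>j. N \<le> j \<Longrightarrow> 1 \<le> j \<Longrightarrow> c j + jump_mean j V \<le> V j"
    and up: "\<And>j. 1 \<le> j \<Longrightarrow> 1 / 2 \<le> P j (Suc j)"
    and down: "\<And>j. i < j \<Longrightarrow> 0 < P j i"
  shows "\<exists>W. lyapunov c W i"
proof -
  define N' where "N' = max N (i + 1)"
  define B where "B = (\<Sum>j\<in>{1..N'}. \<bar>c j + jump_mean j V - V j\<bar>)"
  define S where "S = (\<Sum>m\<in>{i+1..N'}. 1 / P m i)"
  define A where "A = V i + 2 ^ (i + 1) * B + B * S"
  have B: "0 \<le> B"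
    by (simp add: B_def sum_nonneg)
  have S: "0 \<le> S"
    unfolding S_def using down by (intro sum_nonneg) (auto intro: less_imp_le)
  have A: "V i \<le> A" "2 ^ (i + 1) * B \<le> V i + A"
    using B S V_nonneg[OF i] by (auto simp: A_def)
  have defect_le_B: "c j + jump_mean j V - V j \<le> B" if "j \<in> {1..N'}" for j
    using member_le_sum[OF that, of "\<lambda>j. \<bar>c j + jump_mean j V - V j\<bar>"] by (simp add: B_def)
  have above: "c j + jump_mean j V - V j \<le> A * P j i" if "i < j" for j
  proof (cases "j \<le> N'")
    case True
    have "1 / P j i \<le> S"
      unfolding S_def by (rule member_le_sum) (use that True down in \<open>auto intro: less_imp_le\<close>)
    then have "B / P j i \<le> B * S"
      using B mult_left_mono[of "1 / P j i" S B] by simp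
    also have "\<dots> \<le> A"
      using B V_nonneg[OF i] by (simp add: A_def)
    finally have "B / P j i \<le> A" .
    then show ?thesis
      using defect_le_B[of j] that True down[OF that] by (simp add: pos_divide_le_eq)
  next
    case False
    then have "c j + jump_mean j V - V j \<le> 0"
      using drift[of j] that by (simp add: N'_def)
    moreover have "0 \<le> A * P j i"
      using A(1) V_nonneg[OF i] down[OF that] by simp
    ultimately show ?thesis
      by linarith
  qed
  have below: "c j + jump_mean j V - V j \<le> B" if "1 \<le> j" "j < i" for j
    using defect_le_B that by (simp add: N'_def)
  have "lyapunov c (\<lambda>j. V j + A - ramp i (V i + A) B j) i"
    by (rule lyapunov_add_const_minus_ramp[where V=V and c=c, OF i V_nonneg up B A below above])
  then show ?thesis
    by blast
qed

end

section \<open>The generator Qbar\<close>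

lemma qrate_Qbar: "1 \<le> j \<Longrightarrow> qrate (Qbar p) j = (2 + real j) * p - p ^ j"
  by (simp add: qrate_def Qbar_def)

lemma binomial_weights_sum:
  fixes p :: real
  shows "(\<Sum>m\<le>n. real (n choose m) * p ^ m * (1 - p) ^ (n - m)) = 1"
  using binomial_ring[of p "1 - p" n] by simp

lemma binomial_weights_mean:
  fixes p :: real
  shows "(\<Sum>m\<le>n. real (n choose m) * p ^ m * (1 - p) ^ (n - m) * real m) = real n * p"
proof (cases n)
  case (Suc n')
  have "(\<Sum>m\<le>Suc n'. real (Suc n' choose m) * p ^ m * (1 - p) ^ (Suc n' - m) * real m)
      = (\<Sum>k\<le>n'. real (Suc n' choose Suc k) * p ^ Suc k * (1 - p) ^ (Suc n' - Suc k) * real (Suc k))"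
    by (subst sum.atMost_Suc_shift) simp
  also have "\<dots> = (\<Sum>k\<le>n'. real (Suc n') * p * (real (n' choose k) * p ^ k * (1 - p) ^ (n' - k)))"
  proof (rule sum.cong[OF refl])
    fix k
    have "real (Suc n' choose Suc k) * real (Suc k) = real (Suc n') * real (n' choose k)"
      using Suc_times_binomial_eq[of n' k] by (simp only: of_nat_mult[symmetric])
    then show "real (Suc n' choose Suc k) * p ^ Suc k * (1 - p) ^ (Suc n' - Suc k) * real (Suc k)
        = real (Suc n') * p * (real (n' choose k) * p ^ k * (1 - p) ^ (n' - k))"
      by (simp del: binomial_Suc_Suc of_nat_Suc add: algebra_simps)
  qed
  also have "\<dots> = real (Suc n') * p"
    using binomial_weights_sum[of n' p] by (simp add: sum_distrib_left[symmetric])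
  finally show ?thesis
    using Suc by simp
qed simp

text \<open>The downward rates of \<open>Qbar p\<close> in row \<open>j\<close>, together with the \<open>p ^ j\<close> part of the
  diagonal, are \<open>p\<close> times the law of \<open>1 + Bin(j - 1, p)\<close>.\<close>

lemma sum_Qbar_mult:
  fixes p :: real and V :: "nat \<Rightarrow> real"
  assumes "1 \<le> j"
  shows "(\<Sum>k\<in>{1..j+1}. Qbar p j k * V k)
       = p * (\<Sum>m\<le>j-1. real ((j-1) choose m) * p ^ m * (1 - p) ^ (j - 1 - m) * V (m + 1))
         - (2 + real j) * p * V j + real (j + 1) * p * V (j + 1)"
proof -
  obtain n where n: "j = Suc n"
    using assms by (cases j) auto
  have "(\<Sum>k\<in>{1..j+1}. Qbar p j k * V k)
      = (\<Sum>m<n. Qbar p j (Suc m) * V (Suc m)) + Qbar p j j * V j + Qbar p j (j+1) * V (j+1)"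
    using sum.atLeast1_atMost_eq[of "\<lambda>k. Qbar p j k * V k" "Suc (Suc n)"] n by simp
  also have "(\<Sum>m<n. Qbar p j (Suc m) * V (Suc m))
      = (\<Sum>m<n. p * (real (n choose m) * p ^ m * (1 - p) ^ (n - m) * V (m + 1)))"
  proof (rule sum.cong[OF refl])
    fix m assume "m \<in> {..<n}"
    then have m: "m < n"
      by simp
    then have "Suc n - Suc m = Suc (n - Suc m)" "n - m = Suc (n - Suc m)"
      by auto
    then show "Qbar p j (Suc m) * V (Suc m) = p * (real (n choose m) * p ^ m * (1 - p) ^ (n - m) * V (m + 1))"
      using m n by (simp add: Qbar_def algebra_simps)
  qed
  also have "Qbar p j j = p ^ j - (2 + real j) * p"
    using n by (simp add: Qbar_def)
  also have "Qbar p j (j+1) = real (j + 1) * p"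
    using n by (simp add: Qbar_def)
  also have "(\<Sum>m\<le>j-1. real ((j-1) choose m) * p ^ m * (1 - p) ^ (j - 1 - m) * V (m + 1))
      = (\<Sum>m<n. real (n choose m) * p ^ m * (1 - p) ^ (n - m) * V (m + 1)) + p ^ n * V j"
    using n by (simp add: lessThan_Suc_atMost[symmetric])
  ultimately show ?thesis
    using n by (simp add: sum_distrib_left algebra_simps)
qed

lemma skip_free_chain_Qbar:
  fixes p :: real
  assumes p: "0 < p" "p \<le> 1"
  shows "skip_free_chain (Qbar p)"
proof
  fix j :: nat assume j: "1 \<le> j"
  have "p ^ j \<le> p ^ 1"
    by (rule power_decreasing) (use j p in auto)
  moreover have "1 * p < (2 + real j) * p"
    by (rule mult_strict_right_mono) (use p in auto)
  ultimately show "0 < qrate (Qbar p) j"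
    using qrate_Qbar[OF j, of p] by simp
  have "(\<Sum>k\<in>{1..j+1}. Qbar p j k * 1) = p * 1 - (2 + real j) * p * 1 + real (j + 1) * p * 1"
    using sum_Qbar_mult[OF j, of p "\<lambda>_. 1"] binomial_weights_sum[of "j - 1" p] by simp
  then show "(\<Sum>k\<in>{1..j+1}. Qbar p j k) = 0"
    by (simp add: algebra_simps)
next
  fix j k :: nat assume "1 \<le> j" "k \<noteq> j"
  then show "0 \<le> Qbar p j k"
    using p by (auto simp: Qbar_def)
next
  fix j k :: nat assume "1 \<le> j" "k = 0 \<or> j + 1 < k"
  then show "Qbar p j k = 0"
    by (auto simp: Qbar_def)
qed

lemma qrate_Qbar_le:
  fixes p :: real
  assumes "0 < p" "1 \<le> k"
  shows "qrate (Qbar p) k \<le> 2 * p * real (k + 1)"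
proof -
  have "qrate (Qbar p) k \<le> (2 + real k) * p"
    using qrate_Qbar[OF assms(2), of p] assms by simp
  also have "\<dots> \<le> 2 * p * real (k + 1)"
    using assms by (simp add: algebra_simps)
  finally show ?thesis .
qed

lemma linear_rate_chain_Qbar:
  fixes p :: real
  assumes "0 < p" "p \<le> 1"
  shows "linear_rate_chain (Qbar p) (2 * p)"
  using skip_free_chain_Qbar[OF assms] qrate_Qbar_le[OF assms(1)] assms(1)
  by (simp add: linear_rate_chain_def linear_rate_chain_axioms_def)

lemma jump_prob_Qbar_up:
  fixes p :: real
  assumes p: "0 < p" "p \<le> 1" and j: "1 \<le> j"
  shows "1 / 2 \<le> jump_prob (Qbar p) j (Suc j)"
proof -
  interpret skip_free_chain "Qbar p"
    by (rule skip_free_chain_Qbar[OF p])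
  have "Qbar p j (Suc j) = real (j + 1) * p"
    using j by (cases j) (simp_all add: Qbar_def)
  then have "jump_prob (Qbar p) j (Suc j) = real (j + 1) * p / qrate (Qbar p) j"
    using j by (simp add: jump_prob_eq)
  moreover have "qrate (Qbar p) j \<le> 2 * (real (j + 1) * p)"
    using qrate_Qbar_le[OF p(1) j] by (simp add: algebra_simps)
  ultimately show ?thesis
    using qrate_pos[OF j] by (simp add: pos_le_divide_eq)
qed

lemma jump_prob_Qbar_down:
  fixes p :: real
  assumes p: "0 < p" "p < 1" and i: "1 \<le> i" "i < j"
  shows "0 < jump_prob (Qbar p) j i"
proof -
  interpret skip_free_chain "Qbar p"
    by (rule skip_free_chain_Qbar) (use p in auto)
  have "0 < Qbar p j i"
    using p i by (simp add: Qbar_def)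
  then show ?thesis
    using qrate_pos[of j] i by (simp add: jump_prob_eq)
qed

section \<open>A concave test function\<close>

lemma le_tangent_if_deriv2_nonpos:
  fixes g g' g'' :: "real \<Rightarrow> real" and a :: real
  assumes d1: "\<And>x. a < x \<Longrightarrow> (g has_real_derivative g' x) (at x)"
    and d2: "\<And>x. a < x \<Longrightarrow> (g' has_real_derivative g'' x) (at x)"
    and nonpos: "\<And>x. a < x \<Longrightarrow> g'' x \<le> 0"
    and x: "a < x" and y: "a < y"
  shows "g x \<le> g y + g' y * (x - y)"
proof -
  have "convex_on {a<..} (\<lambda>x. - g x)"
    by (rule f''_ge0_imp_convex[where f'="\<lambda>x. - g' x" and f''="\<lambda>x. - g'' x"])
       (use d1 d2 nonpos in \<open>auto intro: DERIV_minus\<close>)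
  then have "(- g' y) * (x - y) \<le> (- g x) - (- g y)"
    by (rule convex_on_imp_above_tangent)
       (use x y d1[OF y] in \<open>auto simp: interior_open intro: DERIV_minus has_field_derivative_at_within\<close>)
  then show ?thesis
    by (simp add: algebra_simps)
qed

text \<open>For \<open>x > 0\<close>, \<open>powlog q r K x = x powr q * ln (x + K) powr (- r)\<close>; \<open>powlog_dlog\<close> is its
  logarithmic derivative and \<open>powlog_dlog'\<close> the derivative of that.\<close>

definition powlog :: "real \<Rightarrow> real \<Rightarrow> real \<Rightarrow> real \<Rightarrow> real" where
  "powlog q r K x = exp (q * ln x - r * ln (ln (x + K)))"

definition powlog_dlog :: "real \<Rightarrow> real \<Rightarrow> real \<Rightarrow> real \<Rightarrow> real" where
  "powlog_dlog q r K x = q / x - r / ((x + K) * ln (x + K))"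

definition powlog_dlog' :: "real \<Rightarrow> real \<Rightarrow> real \<Rightarrow> real \<Rightarrow> real" where
  "powlog_dlog' q r K x = - q / x\<^sup>2 + r * (ln (x + K) + 1) / ((x + K) * ln (x + K))\<^sup>2"

lemma powlog_pos: "0 < powlog q r K x"
  by (simp add: powlog_def)

locale powlog_concave =
  fixes q r K :: real
  assumes q_pos: "0 < q" and q_less_1: "q < 1" and r_nonneg: "0 \<le> r" and K_pos: "0 < K"
    and ln_K_ge_1: "1 \<le> ln K" and ln_K_ge: "2 * r / (q * (1 - q)) \<le> ln K"
begin

lemma ln_shift_ge:
  assumes "0 < x"
  shows "1 \<le> ln (x + K)" "2 * r / (q * (1 - q)) \<le> ln (x + K)"
proof -
  have "ln K \<le> ln (x + K)"
    using assms K_pos by simp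
  then show "1 \<le> ln (x + K)" "2 * r / (q * (1 - q)) \<le> ln (x + K)"
    using ln_K_ge_1 ln_K_ge by linarith+
qed

lemma powlog_deriv:
  assumes x: "0 < x"
  shows "(powlog q r K has_real_derivative powlog q r K x * powlog_dlog q r K x) (at x)"
proof -
  have xK: "0 < x + K"
    using x K_pos by simp
  have L: "0 < ln (x + K)"
    using ln_shift_ge(1)[OF x] by simp
  have "((\<lambda>x. q * ln x - r * ln (ln (x + K))) has_real_derivative powlog_dlog q r K x) (at x)"
    unfolding powlog_dlog_def by (rule derivative_eq_intros refl | use x xK L in simp)+
  then show ?thesis
    unfolding powlog_def by (rule DERIV_fun_exp)
qed

lemma powlog_dlog_deriv:
  assumes x: "0 < x"
  shows "(powlog_dlog q r K has_real_derivative powlog_dlog' q r K x) (at x)"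
proof -
  have xK: "0 < x + K"
    using x K_pos by simp
  have L: "0 < ln (x + K)"
    using ln_shift_ge(1)[OF x] by simp
  have "((\<lambda>x. (x + K) * ln (x + K)) has_real_derivative (ln (x + K) + 1)) (at x)"
    using xK by (auto intro!: derivative_eq_intros)
  then have "((\<lambda>x. inverse ((x + K) * ln (x + K))) has_real_derivative
      - ((ln (x + K) + 1) * inverse (((x + K) * ln (x + K)) ^ Suc (Suc 0)))) (at x)"
    by (rule DERIV_inverse_fun) (use xK L in simp)
  moreover have "((\<lambda>x. inverse x) has_real_derivative - (1 * inverse (x ^ Suc (Suc 0)))) (at x)"
    by (rule DERIV_inverse_fun[OF DERIV_ident]) (use x in simp)
  ultimately have "((\<lambda>x. q * inverse x - r * inverse ((x + K) * ln (x + K))) has_real_derivative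
      q * (- (1 * inverse (x ^ Suc (Suc 0))))
      - r * (- ((ln (x + K) + 1) * inverse (((x + K) * ln (x + K)) ^ Suc (Suc 0))))) (at x)"
    by (intro DERIV_diff DERIV_cmult)
  then show ?thesis
    unfolding powlog_dlog_def powlog_dlog'_def
    by (simp add: divide_inverse power2_eq_square) (simp add: field_simps)
qed

lemma powlog_dlog_square_le:
  assumes x: "0 < x"
  shows "(powlog_dlog q r K x)\<^sup>2 \<le> (q / x)\<^sup>2"
proof -
  define L where "L = ln (x + K)"
  have L1: "1 \<le> L" and L2: "2 * r / (q * (1 - q)) \<le> L"
    using ln_shift_ge[OF x] by (auto simp: L_def)
  define b where "b = r / ((x + K) * L)"
  have b: "0 \<le> b"
    using r_nonneg K_pos x L1 by (simp add: b_def)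
  have "r \<le> 2 * q * L"
  proof -
    have "2 * r \<le> L * (q * (1 - q))"
      using L2 q_pos q_less_1 by (simp add: pos_divide_le_eq)
    also have "\<dots> \<le> L * (2 * q)"
      using q_pos q_less_1 L1 by (intro mult_left_mono) (auto simp: algebra_simps)
    finally show ?thesis
      using r_nonneg by (simp add: algebra_simps)
  qed
  have "b \<le> 2 * (q / x)"
  proof -
    have "b \<le> r / (x * L)"
      unfolding b_def using r_nonneg K_pos L1 x by (intro divide_left_mono mult_right_mono mult_pos_pos) auto
    also have "\<dots> \<le> 2 * q * L / (x * L)"
      using \<open>r \<le> 2 * q * L\<close> x L1 by (intro divide_right_mono) auto
    also have "\<dots> = 2 * (q / x)"
      using L1 x by simp
    finally show ?thesis .
  qed
  have "(powlog_dlog q r K x)\<^sup>2 - (q / x)\<^sup>2 = b * (b - 2 * (q / x))"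
    by (simp add: powlog_dlog_def b_def L_def power2_eq_square algebra_simps)
  also have "\<dots> \<le> 0"
    using b \<open>b \<le> 2 * (q / x)\<close> by (simp add: mult_nonneg_nonpos)
  finally show ?thesis
    by simp
qed

lemma powlog_dlog'_le:
  assumes x: "0 < x"
  shows "powlog_dlog' q r K x \<le> - q / x\<^sup>2 + 2 * r / (x\<^sup>2 * ln (x + K))"
proof -
  define L where "L = ln (x + K)"
  have L1: "1 \<le> L"
    using ln_shift_ge[OF x] by (simp add: L_def)
  have "r * (L + 1) / ((x + K) * L)\<^sup>2 \<le> r * (L + 1) / (x\<^sup>2 * L\<^sup>2)"
    unfolding power_mult_distrib
    using r_nonneg L1 K_pos x by (intro divide_left_mono mult_right_mono mult_pos_pos power_mono) auto
  also have "\<dots> \<le> r * (2 * L) / (x\<^sup>2 * L\<^sup>2)"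
    using r_nonneg L1 x by (intro divide_right_mono mult_left_mono) auto
  also have "\<dots> = 2 * r / (x\<^sup>2 * L)"
    using L1 by (simp add: power2_eq_square field_simps)
  finally show ?thesis
    by (simp add: powlog_dlog'_def L_def)
qed

lemma powlog_dlog'_plus_square_nonpos:
  assumes x: "0 < x"
  shows "powlog_dlog' q r K x + (powlog_dlog q r K x)\<^sup>2 \<le> 0"
proof -
  define L where "L = ln (x + K)"
  have L1: "1 \<le> L" and L2: "2 * r / (q * (1 - q)) \<le> L"
    using ln_shift_ge[OF x] by (auto simp: L_def)
  have "powlog_dlog' q r K x + (powlog_dlog q r K x)\<^sup>2 \<le> - q / x\<^sup>2 + 2 * r / (x\<^sup>2 * L) + (q / x)\<^sup>2"
    using powlog_dlog'_le[OF x] powlog_dlog_square_le[OF x] by (simp add: L_def)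
  also have "\<dots> = (q\<^sup>2 - q + 2 * r / L) / x\<^sup>2"
    using x L1 by (simp add: power2_eq_square field_simps)
  also have "\<dots> \<le> 0"
  proof -
    have "2 * r / L \<le> q * (1 - q)"
      using L2 L1 q_pos q_less_1 by (simp add: divide_le_eq pos_divide_le_eq mult.commute)
    then show ?thesis
      by (intro divide_nonpos_pos) (use x in \<open>simp_all add: power2_eq_square algebra_simps\<close>)
  qed
  finally show ?thesis .
qed

lemma powlog_le_tangent:
  assumes "0 < x" "0 < y"
  shows "powlog q r K x \<le> powlog q r K y + powlog q r K y * powlog_dlog q r K y * (x - y)"
proof (rule le_tangent_if_deriv2_nonpos[where a=0])
  show "((\<lambda>x. powlog q r K x * powlog_dlog q r K x) has_real_derivative
      powlog q r K x * (powlog_dlog' q r K x + (powlog_dlog q r K x)\<^sup>2)) (at x)" if "0 < x" for x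
    using DERIV_mult[OF powlog_deriv[OF that] powlog_dlog_deriv[OF that]]
    by (rule DERIV_cong) (simp add: algebra_simps power2_eq_square)
  show "powlog q r K x * (powlog_dlog' q r K x + (powlog_dlog q r K x)\<^sup>2) \<le> 0" if "0 < x" for x
    using powlog_dlog'_plus_square_nonpos[OF that] powlog_pos[of q r K x] by (simp add: mult_nonneg_nonpos)
qed (use assms powlog_deriv in auto)

end

section \<open>The drift of Qbar\<close>

lemma binomial_jensen_tangent:
  fixes g :: "real \<Rightarrow> real" and p d :: real and n :: nat
  assumes p: "0 \<le> p" "p \<le> 1"
    and tangent: "\<And>m. m \<le> n \<Longrightarrow> g (1 + real m) \<le> g (1 + real n * p) + d * (real m - real n * p)"
  shows "(\<Sum>m\<le>n. real (n choose m) * p ^ m * (1 - p) ^ (n - m) * g (1 + real m)) \<le> g (1 + real n * p)"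
proof -
  define w where "w m = real (n choose m) * p ^ m * (1 - p) ^ (n - m)" for m
  have "(\<Sum>m\<le>n. w m * g (1 + real m)) \<le> (\<Sum>m\<le>n. w m * (g (1 + real n * p) + d * (real m - real n * p)))"
    using tangent p by (intro sum_mono mult_left_mono) (auto simp: w_def)
  also have "\<dots> = (\<Sum>m\<le>n. g (1 + real n * p) * w m + d * (w m * real m) - d * (real n * p) * w m)"
    by (rule sum.cong) (simp_all add: algebra_simps)
  also have "\<dots> = g (1 + real n * p) * (\<Sum>m\<le>n. w m) + d * (\<Sum>m\<le>n. w m * real m)
      - d * (real n * p) * (\<Sum>m\<le>n. w m)"
    by (simp add: sum.distrib sum_subtractf sum_distrib_left)
  also have "\<dots> = g (1 + real n * p)"
    using binomial_weights_sum[of n p] binomial_weights_mean[of n p] by (simp add: w_def)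
  finally show ?thesis
    by (simp add: w_def)
qed

definition powlog_drift :: "real \<Rightarrow> real \<Rightarrow> real \<Rightarrow> real \<Rightarrow> real \<Rightarrow> real" where
  "powlog_drift p q r K x =
     powlog q r K (p * x + 1 - p) - powlog q r K x + (x + 1) * (powlog q r K x * powlog_dlog q r K x)"

lemma eventually_drift_from_limits:
  fixes D F h :: "real \<Rightarrow> real" and \<theta> :: real
  assumes lim_D: "((\<lambda>x. D x / h x) \<longlongrightarrow> \<theta>) at_top" and \<theta>: "\<theta> < 0"
    and lim_F: "((\<lambda>x. (F x + 1) / h x) \<longlongrightarrow> 1) at_top"
    and h_pos: "eventually (\<lambda>x. 0 < h x) at_top"
  shows "eventually (\<lambda>x. 4 / (- \<theta>) * D x + F x + 1 \<le> 0) at_top"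
proof -
  have "eventually (\<lambda>x. D x / h x < \<theta> / 2) at_top"
    by (rule order_tendstoD(2)[OF lim_D]) (use \<theta> in simp)
  moreover have "eventually (\<lambda>x. (F x + 1) / h x < 2) at_top"
    by (rule order_tendstoD(2)[OF lim_F]) simp
  ultimately show ?thesis
    using h_pos
  proof eventually_elim
    case (elim x)
    then have D: "D x < \<theta> / 2 * h x" and F: "F x + 1 < 2 * h x"
      by (simp_all add: divide_less_eq)
    have "4 / (- \<theta>) * D x \<le> 4 / (- \<theta>) * (\<theta> / 2 * h x)"
      using D \<theta> by (intro mult_left_mono) auto
    also have "\<dots> = - 2 * h x"
      using \<theta> by (simp add: field_simps)
    finally show ?case
      using F by simp
  qed
qed

context powlog_concave
begin

lemma sum_Qbar_powlog_le:
  fixes p C :: real and j :: nat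
  assumes p: "0 < p" "p \<le> 1" and j: "1 \<le> j" and C: "0 \<le> C"
  shows "(\<Sum>k\<in>{1..j+1}. Qbar p j k * (C * powlog q r K (real k))) \<le> C * p * powlog_drift p q r K (real j)"
proof -
  define g where "g = powlog q r K"
  define g' where "g' x = powlog q r K x * powlog_dlog q r K x" for x
  define M where "M = 1 + real (j - 1) * p"
  have M_pos: "0 < M"
    using p by (simp add: M_def add_pos_nonneg)
  have binomial: "(\<Sum>m\<le>j-1. real ((j-1) choose m) * p ^ m * (1 - p) ^ (j - 1 - m) * g (1 + real m)) \<le> g M"
  proof (unfold M_def, rule binomial_jensen_tangent[where d="g' M"])
    show "g (1 + real m) \<le> g (1 + real (j - 1) * p) + g' M * (real m - real (j - 1) * p)" for m
      using powlog_le_tangent[OF _ M_pos, of "1 + real m"] by (simp add: g_def g'_def M_def)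
  qed (use p in auto)
  have up: "g (real (j + 1)) \<le> g (real j) + g' (real j)"
    using powlog_le_tangent[of "real j + 1" "real j"] j by (simp add: g_def g'_def add.commute)
  have "(\<Sum>k\<in>{1..j+1}. Qbar p j k * (C * g (real k))) = C * (\<Sum>k\<in>{1..j+1}. Qbar p j k * g (real k))"
    by (simp only: sum_distrib_left mult.left_commute)
  also have "\<dots> = C * (p * (\<Sum>m\<le>j-1. real ((j-1) choose m) * p ^ m * (1 - p) ^ (j - 1 - m) * g (1 + real m))
        - (2 + real j) * p * g (real j) + real (j + 1) * p * g (real (j + 1)))"
    using sum_Qbar_mult[OF j, of p "\<lambda>k. g (real k)"] by simp
  also have "\<dots> \<le> C * (p * g M - (2 + real j) * p * g (real j) + real (j + 1) * p * (g (real j) + g' (real j)))"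
    using binomial up p C by (intro mult_left_mono add_mono diff_mono mult_left_mono) auto
  also have "\<dots> = C * p * powlog_drift p q r K (real j)"
    using j by (simp add: powlog_drift_def g_def g'_def M_def of_nat_diff algebra_simps)
  finally show ?thesis
    by (simp add: g_def)
qed

lemma Qbar_powlog_drift:
  fixes p \<theta> :: real and f h :: "real \<Rightarrow> real"
  assumes p: "0 < p" "p \<le> 1"
    and lim_drift: "((\<lambda>x. powlog_drift p q r K x / h x) \<longlongrightarrow> \<theta>) at_top" and \<theta>: "\<theta> < 0"
    and lim_f: "((\<lambda>x. (f x + 1) / h x) \<longlongrightarrow> 1) at_top"
    and h_pos: "eventually (\<lambda>x. 0 < h x) at_top"
  shows "\<exists>V N. (\<forall>k\<ge>1. 0 \<le> V k) \<and>
    (\<forall>j\<ge>N. 1 \<le> j \<longrightarrow> (\<Sum>k\<in>{1..j+1}. Qbar p j k * V k) + f (real j) + 1 \<le> 0)"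
proof -
  define C where "C = 4 / (p * (- \<theta>))"
  have "0 < p * (- \<theta>)"
    using p \<theta> by (intro mult_pos_pos) auto
  then have C: "0 \<le> C"
    by (simp add: C_def)
  obtain X where X: "\<And>x. X \<le> x \<Longrightarrow> 4 / (- \<theta>) * powlog_drift p q r K x + f x + 1 \<le> 0"
    using eventually_drift_from_limits[OF lim_drift \<theta> lim_f h_pos] by (auto simp: eventually_at_top_linorder)
  have drift: "(\<Sum>k\<in>{1..j+1}. Qbar p j k * (C * powlog q r K (real k))) + f (real j) + 1 \<le> 0"
    if "nat \<lceil>X\<rceil> \<le> j" "1 \<le> j" for j
  proof -
    have "C * p * powlog_drift p q r K (real j) = 4 / (- \<theta>) * powlog_drift p q r K (real j)"
      using p by (simp add: C_def)
    moreover have "X \<le> real j"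
      using that(1) by linarith
    ultimately show ?thesis
      using sum_Qbar_powlog_le[OF p that(2) C] X[of "real j"] by linarith
  qed
  have "0 \<le> C * powlog q r K (real k)" for k
    using C powlog_pos[of q r K "real k"] by (simp add: less_imp_le)
  with drift show ?thesis
    by (intro exI[of _ "\<lambda>k. C * powlog q r K (real k)"] exI[of _ "nat \<lceil>X\<rceil>"]) auto
qed

end

lemma Qbar_drift_criterion:
  fixes p :: real and V f :: "nat \<Rightarrow> real"
  assumes p: "0 < p" "p < 1"
    and V_nonneg: "\<forall>k\<ge>1. 0 \<le> V k" and f_nonneg: "\<And>k. 1 \<le> k \<Longrightarrow> 0 \<le> f k"
    and drift: "\<forall>j\<ge>N. 1 \<le> j \<longrightarrow> (\<Sum>k\<in>{1..j+1}. Qbar p j k * V k) + f j + 1 \<le> 0"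
  shows "positive_recurrent (Qbar p) {1..} \<and> (\<exists>\<pi>. stationary_distribution (Qbar p) {1..} \<pi>) \<and>
    (\<forall>\<pi>. stationary_distribution (Qbar p) {1..} \<pi> \<longrightarrow> (\<lambda>j. \<pi> j * f j) summable_on {1..})"
proof -
  interpret linear_rate_chain "Qbar p" "2 * p"
    by (rule linear_rate_chain_Qbar) (use p in auto)
  have down: "0 < P j i" if "1 \<le> i" "i < j" for i j
    using jump_prob_Qbar_down p that by blast
  have lyapunov: "\<exists>W. lyapunov c W i"
    if i: "1 \<le> i" and c: "\<And>j. 1 \<le> j \<Longrightarrow> c j * qrate (Qbar p) j \<le> f j + 1" for c i
  proof (rule lyapunov_exists[OF i])
    show "c j + jump_mean j V \<le> V j" if "N \<le> j" "1 \<le> j" for j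
      unfolding jump_mean_drift_iff[OF that(2)] using drift c[OF that(2)] that by force
  qed (use V_nonneg jump_prob_Qbar_up p down i in auto)
  have holding: "\<exists>W. lyapunov (\<lambda>k. 1 / qrate (Qbar p) k) W i" if "1 \<le> i" for i
    by (rule lyapunov[OF that]) (use qrate_pos f_nonneg in simp)
  have "positive_recurrent (Qbar p) {1..}"
    unfolding positive_recurrent_def using holding positive_recurrent_stateI by auto
  moreover have "\<exists>\<pi>. stationary_distribution (Qbar p) {1..} \<pi>"
    using holding[of 1] stationary_distribution_exists by auto
  moreover have "(\<lambda>j. \<pi> j * f j) summable_on {1..}" if "stationary_distribution (Qbar p) {1..} \<pi>" for \<pi>
  proof -
    have "f j / qrate (Qbar p) j * qrate (Qbar p) j \<le> f j + 1" if "1 \<le> j" for j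
      using qrate_pos[OF that] by simp
    then obtain W W' where "lyapunov (\<lambda>k. 1 / qrate (Qbar p) k) W 1" "lyapunov (\<lambda>k. f k / qrate (Qbar p) k) W' 1"
      using holding[of 1] lyapunov[of 1 "\<lambda>k. f k / qrate (Qbar p) k"] by auto
    then show ?thesis
      using stationary_moment_summable[where i=1 and f=f, OF _ _ _ f_nonneg _ that] down[of 1] by auto
  qed
  ultimately show ?thesis
    by blast
qed

lemma ln_less_minus_one:
  fixes x :: real
  assumes "0 < x" "x \<noteq> 1"
  shows "ln x < x - 1"
proof -
  have "ln x = 2 * ln (sqrt x)"
    using assms by (simp add: ln_sqrt)
  also have "\<dots> \<le> 2 * (sqrt x - 1)"
    using ln_le_minus_one[of "sqrt x"] assms by simp
  also have "\<dots> < x - 1"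
  proof -
    have "0 < (sqrt x - 1)\<^sup>2"
      using assms by simp
    then show ?thesis
      using assms by (simp add: power2_eq_square algebra_simps)
  qed
  finally show ?thesis .
qed

lemma critical_exponent_bound:
  fixes p q :: real
  assumes p: "0 < p" and q: "0 < q" "q < 1" and pq: "p powr q = 1 - q"
  shows "(1 - q) * (- ln p) < 1"
proof -
  have q_ln_p: "q * ln p = ln (1 - q)"
    using pq p by (metis ln_powr)
  have "ln (1 / (1 - q)) < 1 / (1 - q) - 1"
    by (rule ln_less_minus_one) (use q in auto)
  then have "- ((1 - q) * ln (1 - q)) < q"
    using q by (simp add: ln_div field_simps)
  then have "q * ((1 - q) * (- ln p)) < q * 1"
    using q_ln_p by (simp add: algebra_simps)
  then show ?thesis
    by (simp only: mult_less_cancel_left_pos[OF q(1)])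
qed

lemma Qbar_drift_subcritical:
  fixes p q :: real
  assumes p: "0 < p" "p < 1" and q: "0 < q" "q < 1" and h: "-1 + q + p powr q < 0"
  shows "\<exists>V N. (\<forall>k\<ge>1. 0 \<le> V k) \<and>
    (\<forall>j\<ge>N. 1 \<le> j \<longrightarrow> (\<Sum>k\<in>{1..j+1}. Qbar p j k * V k) + real j powr q + 1 \<le> 0)"
proof -
  define K :: real where "K = exp 1"
  have K: "1 < K"
    by (simp add: K_def)
  interpret powlog_concave q 0 K
    by unfold_locales (use q K in \<open>auto simp: K_def\<close>)
  define \<theta> where "\<theta> = exp (q * ln p) - 1 + q"
  have \<theta>: "\<theta> < 0"
    using h p by (simp add: \<theta>_def powr_def)
  have lim_drift: "((\<lambda>x. powlog_drift p q 0 K x / powlog q 0 K x) \<longlongrightarrow> \<theta>) at_top"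
    unfolding powlog_drift_def powlog_def powlog_dlog_def \<theta>_def
    using p q K by (real_asymp simp: p q K)
  have lim_f: "((\<lambda>x. (x powr q + 1) / powlog q 0 K x) \<longlongrightarrow> 1) at_top"
    unfolding powlog_def using p q K by (real_asymp simp: p q K)
  show ?thesis
    by (rule Qbar_powlog_drift[OF p(1) less_imp_le[OF p(2)] lim_drift \<theta> lim_f])
       (simp add: powlog_pos)
qed

lemma Qbar_drift_critical:
  fixes p q r :: real
  assumes p: "0 < p" "p < 1" and q: "0 < q" "q < 1" and r: "0 < r" and pq: "p powr q = 1 - q"
  shows "\<exists>V N. (\<forall>k\<ge>1. 0 \<le> V k) \<and>
    (\<forall>j\<ge>N. 1 \<le> j \<longrightarrow> (\<Sum>k\<in>{1..j+1}. Qbar p j k * V k)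
        + real j powr q * ln (real j + 1) powr (-(r + 1)) + 1 \<le> 0)"
proof -
  define K :: real where "K = exp (1 + 2 * r / (q * (1 - q)))"
  have "0 \<le> 2 * r / (q * (1 - q))"
    using q r by simp
  then have K: "1 < K"
    by (simp add: K_def)
  interpret powlog_concave q r K
    by unfold_locales (use q K r \<open>0 \<le> 2 * r / (q * (1 - q))\<close> in \<open>auto simp: K_def\<close>)
  have exp_q_ln_p: "exp (q * ln p) = 1 - q"
    using p pq by (simp add: powr_def)
  define \<theta> where "\<theta> = - r * (1 - q) * ln p - r"
  have \<theta>: "\<theta> < 0"
    using critical_exponent_bound[OF p(1) q pq] r mult_strict_left_mono[of "(1 - q) * (- ln p)" 1 r]
    by (simp add: \<theta>_def algebra_simps)
  have lim_drift: "((\<lambda>x. powlog_drift p q r K x / (powlog q r K x / ln (x + K))) \<longlongrightarrow> \<theta>) at_top"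
    unfolding powlog_drift_def powlog_def powlog_dlog_def \<theta>_def
    using p q K r exp_q_ln_p by (real_asymp simp: p q K r exp_q_ln_p)
  have lim_f: "((\<lambda>x. (x powr q * ln (x + 1) powr (-(r + 1)) + 1) / (powlog q r K x / ln (x + K)))
      \<longlongrightarrow> 1) at_top"
    unfolding powlog_def using p q K r by (real_asymp simp: p q K r)
  have "eventually (\<lambda>x. 0 < powlog q r K x / ln (x + K)) at_top"
    using eventually_gt_at_top[of 0]
    by eventually_elim (use ln_shift_ge(1) powlog_pos in \<open>fastforce intro: divide_pos_pos\<close>)
  then show ?thesis
    by (rule Qbar_powlog_drift[OF p(1) less_imp_le[OF p(2)] lim_drift \<theta> lim_f])
qed

lemma Qbar_moments_subcritical:
  fixes p q :: real
  assumes p: "0 < p" "p \<le> 1" and q: "0 < q" and h: "-1 + q + p powr q < 0"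
  shows "positive_recurrent (Qbar p) {1..} \<and> (\<exists>\<pi>. stationary_distribution (Qbar p) {1..} \<pi>) \<and>
    (\<forall>\<pi>. stationary_distribution (Qbar p) {1..} \<pi> \<longrightarrow> (\<lambda>j. \<pi> j * real j powr q) summable_on {1..})"
proof -
  have "0 < p powr q"
    using p by simp
  then have q1: "q < 1"
    using h by linarith
  have p1: "p < 1"
    using ge_one_powr_ge_zero[of p q] q h by force
  obtain V N where "\<forall>k\<ge>1. 0 \<le> V k"
    "\<forall>j\<ge>N. 1 \<le> j \<longrightarrow> (\<Sum>k\<in>{1..j+1}. Qbar p j k * V k) + real j powr q + 1 \<le> 0"
    using Qbar_drift_subcritical[OF p(1) p1 q q1 h] by blast
  then show ?thesis
    by (intro Qbar_drift_criterion[where f="\<lambda>j. real j powr q", OF p(1) p1]) auto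
qed

text \<open>The hypothesis \<open>p < exp (-1)\<close> of the theorem only guarantees that \<open>p powr q = 1 - q\<close> has a
  solution \<open>q \<in> (0, 1)\<close>.\<close>

lemma Qbar_moments_critical:
  fixes p q r :: real
  assumes p: "0 < p" "p \<le> 1" and q: "0 < q" and pq: "p powr q = 1 - q" and r: "0 < r"
  shows "positive_recurrent (Qbar p) {1..} \<and> (\<exists>\<pi>. stationary_distribution (Qbar p) {1..} \<pi>) \<and>
    (\<forall>\<pi>. stationary_distribution (Qbar p) {1..} \<pi> \<longrightarrow>
      (\<lambda>j. \<pi> j * (real j powr q * ln (real j + 1) powr (-(r + 1)))) summable_on {1..})"
proof -
  have "0 < p powr q"
    using p by simp
  then have q1: "q < 1"
    using pq by linarith
  have p1: "p < 1"
    using ge_one_powr_ge_zero[of p q] q pq by force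
  obtain V N where "\<forall>k\<ge>1. 0 \<le> V k"
    "\<forall>j\<ge>N. 1 \<le> j \<longrightarrow> (\<Sum>k\<in>{1..j+1}. Qbar p j k * V k)
        + real j powr q * ln (real j + 1) powr (-(r + 1)) + 1 \<le> 0"
    using Qbar_drift_critical[OF p(1) p1 q q1 r pq] by blast
  then show ?thesis
    by (intro Qbar_drift_criterion[where f="\<lambda>j. real j powr q * ln (real j + 1) powr (-(r + 1))", OF p(1) p1])
       auto
qed

theorem proposition6:
  fixes p q r :: real
  assumes hp: "0 < p" "p \<le> 1" and hq: "q > 0"
  shows "(-1 + q + p powr q < 0 \<longrightarrow>
            positive_recurrent (Qbar p) {1..} \<and>
            (\<exists>\<pi>. stationary_distribution (Qbar p) {1..} \<pi>) \<and>
            (\<forall>\<pi>. stationary_distribution (Qbar p) {1..} \<pi> \<longrightarrow>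
                 (\<lambda>j. \<pi> j * real j powr q) summable_on {1..}))
       \<and> (p powr q = 1 - q \<and> p < exp (-1) \<and> r > 0 \<longrightarrow>
            positive_recurrent (Qbar p) {1..} \<and>
            (\<exists>\<pi>. stationary_distribution (Qbar p) {1..} \<pi>) \<and>
            (\<forall>\<pi>. stationary_distribution (Qbar p) {1..} \<pi> \<longrightarrow>
                 (\<lambda>j. \<pi> j * (real j powr q * ln (real j + 1) powr (-(r + 1)))) summable_on {1..}))"
  using Qbar_moments_subcritical[OF hp hq] Qbar_moments_critical[OF hp hq, of r] by blast

end
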